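(* Let $n$ be a positive integer, let $\Delta \ge 0$, and let $\varepsilon_1, \varepsilon_2, \varepsilon_3$ be positive reals. Let $\mathcal{X}$ and $\mathcal{Z}$ be Polish spaces and let $p_{X,Z}$ be a joint distribution on $\mathcal{X}\times\mathcal{Z}$ with marginal $p_X$ on $\mathcal{X}$. Let $d:\mathcal{X}\times\mathcal{X}\to[0,\infty)$ be a distortion measure such that $(d,p_X)$ is uniformly integrable. Let $Q_{X^n,Y^n}$ be a distribution on $\mathcal{X}^n\times\mathcal{X}^n$ satisfying $$\mathbb{E}_Q[d(X^n,Y^n)] \le \Delta+\varepsilon_1 \quad\text{and}\quad \|Q_{Y^n}-p_X^{\otimes n}\|_{TV}\le \varepsilon_2 .$$ Let $P^{(1)}$ be the distribution induced by an $(n,R,R_c)$ D-code (respectively, an $(n,R,R_c)$ E-D-code) for some reals $R,R_c\ge 0$, and assume that $$\|P^{(1)}_{X^n,Y^n}-Q_{X^n,Y^n}\|_{TV}\le\varepsilon_3 .$$ Then there exists an $(n,R,R_c)$ D-code (respectively, E-D-code) with the same encoder as the code inducing $P^{(1)}$, which induces a distribution $P^{(2)}$ satisfying $$\mathbb{E}_{P^{(2)}}[d(X^n,Y^n)] \le \Delta+\varepsilon_1+\sup_{X,Y,B}\mathbb{E}\big[d(X,Y)\,\mathbf{1}_B\big] \quad\text{and}\quad P^{(2)}_{Y^n}= p_X^{\otimes n},$$ where the supremum is over all pairs of random variables $X,Y$ (on a common probability space) each having law $p_X$ and all events $B$ with probability at most $\varepsilon_2+2\varepsilon_3$.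
   Context: Setting: lossy source coding with side information $Z^n$ and common randomness. The source is $(X^n,Z^n)\sim p_{X,Z}^{\otimes n}$ (i.i.d.). For $x^n,y^n\in\mathcal{X}^n$, $d(x^n,y^n)=\frac1n\sum_{t=1}^n d(x_t,y_t)$. The pair $(d,p_X)$ is uniformly integrable if $\sup_{X,Y,B}\mathbb{E}[d(X,Y)\mathbf{1}_B]\to 0$ as $\tau\to 0$, where the supremum is over all random variables $X,Y$ each with law $p_X$ and all events $B$ with $\mathbb{P}(B)\le\tau$. An $(n,R,R_c)$ D-code consists of a common randomness $J$ uniformly distributed on $\{1,\dots,\lfloor 2^{nR_c}\rfloor\}$ independent of the source, a (possibly randomized) encoder given by a conditional distribution $F_{M\mid X^n,J}$ with message $M\in\{1,\dots,\lfloor 2^{nR}\rfloor\}$, and a (possibly randomized) decoder given by a conditional distribution $G_{Y^n\mid Z^n,J,M}$ with output $Y^n\in\mathcal{X}^n$ (side information available only at the decoder). An $(n,R,R_c)$ E-D-code is the same except that the encoder is $F_{M\mid X^n,Z^n,J}$ (side information at both encoder and decoder). The distribution induced by the code is the joint distribution of $(X^n,Z^n,J,M,Y^n)$ given by $p_{X,Z}^{\otimes n}\cdot p^{\mathcal{U}}_J\cdot F\cdot G$. $\|\cdot\|_{TV}$ denotes total variation distance. *)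

theory Defs
  imports "HOL-Probability.Probability"
begin

abbreviation seqM :: "nat \<Rightarrow> 'a measure \<Rightarrow> (nat \<Rightarrow> 'a) measure" where
  "seqM n M \<equiv> PiM {..<n} (\<lambda>_. M)"

definition code_size :: "nat \<Rightarrow> real \<Rightarrow> nat" where
  "code_size n r = nat \<lfloor>2 powr (real n * r)\<rfloor>"

definition avg_dist :: "('x \<Rightarrow> 'x \<Rightarrow> real) \<Rightarrow> nat \<Rightarrow> (nat \<Rightarrow> 'x) \<Rightarrow> (nat \<Rightarrow> 'x) \<Rightarrow> real" where
  "avg_dist d n x y = (\<Sum>t<n. d (x t) (y t)) / real n"

definition tv_dist :: "'a measure \<Rightarrow> 'a measure \<Rightarrow> real" where
  "tv_dist P Q = (SUP A \<in> sets P. \<bar>measure P A - measure Q A\<bar>)"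

text \<open>The underlying probability space is taken on the
  sample space type 'x \<times> 'x \<times> bool (with an arbitrary sigma-algebra), which is rich
  enough to carry the joint law of any such triple (X, Y, 1_B).\<close>
definition ui_sup :: "('x::topological_space \<Rightarrow> 'x \<Rightarrow> real) \<Rightarrow> 'x measure \<Rightarrow> real \<Rightarrow> ennreal" where
  "ui_sup d pX \<tau> = (SUP (M, X, Y, B) \<in>
      {(M :: ('x \<times> 'x \<times> bool) measure, X, Y, B).
         prob_space M \<and> X \<in> measurable M borel \<and> Y \<in> measurable M borel \<and>
         distr M borel X = pX \<and> distr M borel Y = pX \<and>
         B \<in> sets M \<and> measure M B \<le> \<tau>}.
      \<integral>\<^sup>+ \<omega>. ennreal (d (X \<omega>) (Y \<omega>)) * indicator B \<omega> \<partial>M)"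

definition unif_integrable :: "('x::topological_space \<Rightarrow> 'x \<Rightarrow> real) \<Rightarrow> 'x measure \<Rightarrow> bool" where
  "unif_integrable d pX \<longleftrightarrow> (ui_sup d pX \<longlongrightarrow> 0) (at_right 0)"

text \<open>An (n,R,Rc) E-D-code: encoder F x^n z^n j (a pmf on messages), decoder
  G z^n j m (a probability measure on X^n, measurable in z^n, i.e. a Markov kernel).\<close>
definition is_ED_code ::
  "nat \<Rightarrow> real \<Rightarrow> real \<Rightarrow> ((nat \<Rightarrow> 'x::topological_space) \<Rightarrow> (nat \<Rightarrow> 'z::topological_space) \<Rightarrow> nat \<Rightarrow> nat pmf)
   \<Rightarrow> ((nat \<Rightarrow> 'z) \<Rightarrow> nat \<Rightarrow> nat \<Rightarrow> (nat \<Rightarrow> 'x) measure) \<Rightarrow> bool" where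
  "is_ED_code n R Rc F G \<longleftrightarrow>
     (\<forall>x \<in> space (seqM n borel). \<forall>z \<in> space (seqM n borel). \<forall>j \<in> {1..code_size n Rc}.
        set_pmf (F x z j) \<subseteq> {1..code_size n R}) \<and>
     (\<forall>j \<in> {1..code_size n Rc}. \<forall>m.
        (\<lambda>(x, z). pmf (F x z j) m) \<in> borel_measurable (seqM n borel \<Otimes>\<^sub>M seqM n borel)) \<and>
     (\<forall>j \<in> {1..code_size n Rc}. \<forall>m \<in> {1..code_size n R}.
        (\<lambda>z. G z j m) \<in> measurable (seqM n borel) (prob_algebra (seqM n borel)))"

text \<open>An (n,R,Rc) D-code: an E-D-code whose encoder does not use the side information.\<close>
definition is_D_code ::
  "nat \<Rightarrow> real \<Rightarrow> real \<Rightarrow> ((nat \<Rightarrow> 'x::topological_space) \<Rightarrow> (nat \<Rightarrow> 'z::topological_space) \<Rightarrow> nat \<Rightarrow> nat pmf)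
   \<Rightarrow> ((nat \<Rightarrow> 'z) \<Rightarrow> nat \<Rightarrow> nat \<Rightarrow> (nat \<Rightarrow> 'x) measure) \<Rightarrow> bool" where
  "is_D_code n R Rc F G \<longleftrightarrow> is_ED_code n R Rc F G \<and>
     (\<forall>x z z' j. F x z j = F x z' j)"

definition source_dist :: "nat \<Rightarrow> ('x::topological_space \<times> 'z::topological_space) measure
     \<Rightarrow> ((nat \<Rightarrow> 'x) \<times> (nat \<Rightarrow> 'z)) measure" where
  "source_dist n pXZ = distr (seqM n pXZ) (seqM n borel \<Otimes>\<^sub>M seqM n borel)
     (\<lambda>w. (\<lambda>t\<in>{..<n}. fst (w t), \<lambda>t\<in>{..<n}. snd (w t)))"

definition induced_dist :: "nat \<Rightarrow> real \<Rightarrow> real \<Rightarrow> ('x::topological_space \<times> 'z::topological_space) measure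
     \<Rightarrow> ((nat \<Rightarrow> 'x) \<Rightarrow> (nat \<Rightarrow> 'z) \<Rightarrow> nat \<Rightarrow> nat pmf)
     \<Rightarrow> ((nat \<Rightarrow> 'z) \<Rightarrow> nat \<Rightarrow> nat \<Rightarrow> (nat \<Rightarrow> 'x) measure)
     \<Rightarrow> (((nat \<Rightarrow> 'x) \<times> (nat \<Rightarrow> 'z)) \<times> nat \<times> nat \<times> (nat \<Rightarrow> 'x)) measure" where
  "induced_dist n R Rc pXZ F G =
     source_dist n pXZ \<bind> (\<lambda>(x, z).
       measure_pmf (pmf_of_set {1..code_size n Rc}) \<bind> (\<lambda>j.
       measure_pmf (F x z j) \<bind> (\<lambda>m.
       distr (G z j m)
         ((seqM n borel \<Otimes>\<^sub>M seqM n borel) \<Otimes>\<^sub>M count_space UNIV \<Otimes>\<^sub>M count_space UNIV \<Otimes>\<^sub>M seqM n borel)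
         (\<lambda>y. ((x, z), j, m, y)))))"

definition marg_XY :: "nat \<Rightarrow> (((nat \<Rightarrow> 'x::topological_space) \<times> (nat \<Rightarrow> 'z)) \<times> nat \<times> nat \<times> (nat \<Rightarrow> 'x)) measure
     \<Rightarrow> ((nat \<Rightarrow> 'x) \<times> (nat \<Rightarrow> 'x)) measure" where
  "marg_XY n P = distr P (seqM n borel \<Otimes>\<^sub>M seqM n borel) (\<lambda>((x, z), j, m, y). (x, y))"

definition marg_Y :: "nat \<Rightarrow> (((nat \<Rightarrow> 'x::topological_space) \<times> (nat \<Rightarrow> 'z)) \<times> nat \<times> nat \<times> (nat \<Rightarrow> 'x)) measure
     \<Rightarrow> (nat \<Rightarrow> 'x) measure" where
  "marg_Y n P = distr P (seqM n borel) (\<lambda>((x, z), j, m, y). y)"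

end

theory Submission
  imports Defs
begin

text \<open>The new decoder is the old one followed by a channel K acting on the reconstruction.
  Through Q, the output law of the old code is within \<epsilon>2 + \<epsilon>3 of p_X^n in total variation,
  so the maximal coupling of the two, read as a channel K, turns it exactly into p_X^n while
  changing the joint law of (X^n, Y^n) by at most \<epsilon>2 + \<epsilon>3; the new joint law is then within
  \<epsilon>2 + 2 \<epsilon>3 of Q. Splitting it into a part dominated by Q and a surplus of mass at most
  \<epsilon>2 + 2 \<epsilon>3, its distortion exceeds that of Q at most by the distortion on the surplus.
  Realising the surplus weight as an event B, this is for every letter t a term
  E[d(X_t, Y_t) 1_B] with P(B) \<le> \<epsilon>2 + 2 \<epsilon>3 and X_t, Y_t both of law p_X, because both
  marginals of the new joint law are p_X^n.\<close>

section \<open>Maximal coupling\<close>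

lemma finite_measure_sum_exists:
  assumes "finite_measure \<mu>" "finite_measure \<nu>" "sets \<nu> = sets \<mu>"
  obtains \<rho> where "finite_measure \<rho>" "sets \<rho> = sets \<mu>"
    "\<And>A. A \<in> sets \<mu> \<Longrightarrow> emeasure \<rho> A = emeasure \<mu> A + emeasure \<nu> A"
proof -
  interpret mu: finite_measure \<mu> by fact
  interpret nu: finite_measure \<nu> by fact
  define \<rho> where "\<rho> = measure_of (space \<mu>) (sets \<mu>) (\<lambda>A. emeasure \<mu> A + emeasure \<nu> A)"
  have "countably_additive (sets \<mu>) (\<lambda>A. emeasure \<mu> A + emeasure \<nu> A)"
    unfolding countably_additive_def
  proof safe
    fix A :: "nat \<Rightarrow> _" assume A: "range A \<subseteq> sets \<mu>" "disjoint_family A"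
    then have A': "range A \<subseteq> sets \<nu>" using assms(3) by simp
    have "(\<Sum>i. emeasure \<mu> (A i) + emeasure \<nu> (A i)) = (\<Sum>i. emeasure \<mu> (A i)) + (\<Sum>i. emeasure \<nu> (A i))"
      by (rule suminf_add[symmetric]) auto
    also have "\<dots> = emeasure \<mu> (\<Union>(range A)) + emeasure \<nu> (\<Union>(range A))"
      using suminf_emeasure[OF A] suminf_emeasure[OF A' A(2)] by simp
    finally show "(\<Sum>i. emeasure \<mu> (A i) + emeasure \<nu> (A i)) = emeasure \<mu> (\<Union>(range A)) + emeasure \<nu> (\<Union>(range A))" .
  qed
  then have emeasure_\<rho>: "emeasure \<rho> A = emeasure \<mu> A + emeasure \<nu> A" if "A \<in> sets \<mu>" for A
    unfolding \<rho>_def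
    by (intro emeasure_measure_of_sigma[OF sets.sigma_algebra_axioms _ _ that]) (simp add: positive_def)
  have sets_\<rho>: "sets \<rho> = sets \<mu>" unfolding \<rho>_def
    by (simp add: sets.sets_into_space sets.sigma_sets_eq)
  have "finite_measure \<rho>"
  proof (rule finite_measureI)
    have "space \<rho> = space \<mu>" unfolding \<rho>_def by simp
    then show "emeasure \<rho> (space \<rho>) \<noteq> \<infinity>"
      using emeasure_\<rho>[OF sets.top] sets_eq_imp_space_eq[OF assms(3)]
      by (simp add: mu.emeasure_finite nu.emeasure_finite)
  qed
  then show ?thesis using that sets_\<rho> emeasure_\<rho> by blast
qed

lemma real_density_exists:
  assumes "finite_measure \<rho>" "finite_measure \<mu>" "sets \<mu> = sets \<rho>"
    and le: "\<And>A. A \<in> sets \<rho> \<Longrightarrow> emeasure \<mu> A \<le> emeasure \<rho> A"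
  obtains a where "a \<in> borel_measurable \<rho>" "\<And>x. a x \<ge> 0" "\<mu> = density \<rho> (\<lambda>x. ennreal (a x))"
proof -
  interpret r: finite_measure \<rho> by fact
  interpret m: finite_measure \<mu> by fact
  have "absolutely_continuous \<rho> \<mu>"
    unfolding absolutely_continuous_def
  proof
    fix A assume "A \<in> null_sets \<rho>"
    then show "A \<in> null_sets \<mu>" using le[of A] assms(3) by (auto simp: null_sets_def)
  qed
  from r.Radon_Nikodym[OF this assms(3)]
  obtain f where f: "f \<in> borel_measurable \<rho>" "density \<rho> f = \<mu>" by blast
  have "integral\<^sup>N \<rho> f = emeasure \<mu> (space \<mu>)"
  proof -
    have "emeasure \<mu> (space \<mu>) = (\<integral>\<^sup>+ x. f x * indicator (space \<rho>) x \<partial>\<rho>)"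
      using f by (auto simp: emeasure_density)
    also have "\<dots> = integral\<^sup>N \<rho> f" by (rule nn_integral_cong) simp
    finally show ?thesis by simp
  qed
  then have "AE x in \<rho>. f x \<noteq> \<infinity>"
    using nn_integral_PInf_AE[OF f(1)] m.emeasure_finite by simp
  then have "density \<rho> (\<lambda>x. ennreal (enn2real (f x))) = \<mu>"
    unfolding f(2)[symmetric]
    by (intro density_cong) (use f in \<open>auto elim!: eventually_mono simp: ennreal_enn2real_if\<close>)
  moreover have "(\<lambda>x. enn2real (f x)) \<in> borel_measurable \<rho>" using f by measurable
  ultimately show ?thesis using that[of "\<lambda>x. enn2real (f x)"] by simp
qed

lemma common_real_densities_exist:
  assumes "finite_measure \<mu>" "finite_measure \<nu>" "sets \<nu> = sets \<mu>"
  obtains \<rho> a b where "finite_measure \<rho>" "sets \<rho> = sets \<mu>"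
    "a \<in> borel_measurable \<rho>" "\<And>x. a x \<ge> 0" "\<mu> = density \<rho> (\<lambda>x. ennreal (a x))"
    "b \<in> borel_measurable \<rho>" "\<And>x. b x \<ge> 0" "\<nu> = density \<rho> (\<lambda>x. ennreal (b x))"
proof -
  obtain \<rho> where \<rho>: "finite_measure \<rho>" "sets \<rho> = sets \<mu>"
    "\<And>A. A \<in> sets \<mu> \<Longrightarrow> emeasure \<rho> A = emeasure \<mu> A + emeasure \<nu> A"
    using finite_measure_sum_exists[OF assms] by blast
  obtain a where a: "a \<in> borel_measurable \<rho>" "\<And>x. a x \<ge> 0" "\<mu> = density \<rho> (\<lambda>x. ennreal (a x))"
    using real_density_exists[OF \<rho>(1) assms(1)] \<rho> by (metis le_iff_add)
  obtain b where b: "b \<in> borel_measurable \<rho>" "\<And>x. b x \<ge> 0" "\<nu> = density \<rho> (\<lambda>x. ennreal (b x))"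
    using real_density_exists[OF \<rho>(1) assms(2)] \<rho> assms(3) by (metis add.commute le_iff_add)
  show ?thesis by (rule that[OF \<rho>(1,2) a b])
qed

lemma emeasure_bernoulli_pmf:
  assumes "0 \<le> p" "p \<le> 1"
  shows "emeasure (measure_pmf (bernoulli_pmf p)) A
    = indicator A True * ennreal p + indicator A False * ennreal (1 - p)"
proof -
  have "emeasure (measure_pmf (bernoulli_pmf p)) A = (\<integral>\<^sup>+x. indicator A x \<partial>measure_pmf (bernoulli_pmf p))"
    by simp
  also have "\<dots> = indicator A True * ennreal p + indicator A False * ennreal (1 - p)"
    using assms by (subst nn_integral_bernoulli_pmf) auto
  finally show ?thesis .
qed

lemma measurable_bernoulli_pmf:
  assumes "h \<in> borel_measurable M" "\<And>x. x \<in> space M \<Longrightarrow> 0 \<le> h x \<and> h x \<le> 1"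
  shows "(\<lambda>x. measure_pmf (bernoulli_pmf (h x))) \<in> M \<rightarrow>\<^sub>M prob_algebra (count_space UNIV)"
proof (rule measurable_prob_algebraI)
  show "(\<lambda>x. measure_pmf (bernoulli_pmf (h x))) \<in> M \<rightarrow>\<^sub>M subprob_algebra (count_space UNIV)"
  proof (rule measurable_subprob_algebra)
    fix A :: "bool set"
    have "(\<lambda>x. indicator A True * ennreal (h x) + indicator A False * ennreal (1 - h x)) \<in> borel_measurable M"
      using assms(1) by measurable
    then show "(\<lambda>x. emeasure (measure_pmf (bernoulli_pmf (h x))) A) \<in> borel_measurable M"
      by (rule measurable_cong[THEN iffD1, rotated]) (simp add: emeasure_bernoulli_pmf assms(2))
  qed (auto intro: prob_space_imp_subprob_space measure_pmf.prob_space_axioms)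
qed (rule measure_pmf.prob_space_axioms)

locale two_densities =
  fixes \<rho> \<mu> \<nu> :: "'a measure" and a b :: "'a \<Rightarrow> real"
  assumes prob_\<mu>: "prob_space \<mu>" and prob_\<nu>: "prob_space \<nu>"
    and a_measurable[measurable]: "a \<in> borel_measurable \<rho>"
    and b_measurable[measurable]: "b \<in> borel_measurable \<rho>"
    and a_nonneg: "\<And>x. 0 \<le> a x" and b_nonneg: "\<And>x. 0 \<le> b x"
    and \<mu>_density: "\<mu> = density \<rho> (\<lambda>x. ennreal (a x))"
    and \<nu>_density: "\<nu> = density \<rho> (\<lambda>x. ennreal (b x))"
begin

definition overlap :: "'a \<Rightarrow> real" where "overlap x = min (a x) (b x)"
definition surplus :: "'a \<Rightarrow> real" where "surplus x = max 0 (a x - b x)"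
definition deficit :: "'a \<Rightarrow> real" where "deficit x = max 0 (b x - a x)"

text \<open>The fraction of the mass of \<mu> at x not matched by \<nu> (junk value 0 where a x = 0).\<close>
definition surplus_fraction :: "'a \<Rightarrow> real" where "surplus_fraction x = surplus x / a x"

lemma sets_\<mu>: "sets \<mu> = sets \<rho>" and sets_\<nu>: "sets \<nu> = sets \<rho>"
  by (simp_all add: \<mu>_density \<nu>_density)

lemma measurable_\<mu>_iff: "measurable \<mu> N = measurable \<rho> N"
  by (rule measurable_cong_sets) (simp_all add: sets_\<mu>)

lemma space_\<mu>: "space \<mu> = space \<rho>"
  by (simp add: \<mu>_density)

lemma [measurable]:
  "overlap \<in> borel_measurable \<rho>" "surplus \<in> borel_measurable \<rho>"
  "deficit \<in> borel_measurable \<rho>" "surplus_fraction \<in> borel_measurable \<rho>"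
  unfolding overlap_def surplus_def deficit_def surplus_fraction_def by measurable

lemma surplus_fraction_measurable: "surplus_fraction \<in> borel_measurable \<mu>"
  unfolding measurable_\<mu>_iff by measurable

lemma deficit_nonneg: "0 \<le> deficit x"
  by (simp add: deficit_def)

lemma surplus_fraction_nonneg: "0 \<le> surplus_fraction x"
  and surplus_fraction_le_1: "surplus_fraction x \<le> 1"
  using a_nonneg[of x] b_nonneg[of x] by (auto simp: surplus_fraction_def surplus_def divide_simps)

lemma overlap_nonneg: "0 \<le> overlap x" and surplus_nonneg: "0 \<le> surplus x"
  using a_nonneg[of x] b_nonneg[of x] by (simp_all add: overlap_def surplus_def)

lemma ennreal_a_eq: "ennreal (a x) = ennreal (overlap x) + ennreal (surplus x)"
proof -
  have "a x = overlap x + surplus x" by (auto simp: overlap_def surplus_def)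
  then show ?thesis by (simp add: overlap_nonneg surplus_nonneg flip: ennreal_plus)
qed

lemma ennreal_b_eq: "ennreal (b x) = ennreal (overlap x) + ennreal (deficit x)"
proof -
  have "b x = overlap x + deficit x" by (auto simp: overlap_def deficit_def)
  then show ?thesis by (simp add: overlap_nonneg deficit_nonneg flip: ennreal_plus)
qed

lemma ennreal_a_times_surplus_fraction:
  "ennreal (a x) * ennreal (surplus_fraction x) = ennreal (surplus x)"
proof -
  have "a x * surplus_fraction x = surplus x"
    using a_nonneg[of x] b_nonneg[of x] by (auto simp: surplus_fraction_def surplus_def)
  then show ?thesis
    using a_nonneg[of x] surplus_fraction_nonneg[of x] by (simp flip: ennreal_mult)
qed

lemma ennreal_a_times_one_minus_surplus_fraction:
  "ennreal (a x) * ennreal (1 - surplus_fraction x) = ennreal (overlap x)"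
proof -
  have "a x * (1 - surplus_fraction x) = overlap x"
    using a_nonneg[of x] b_nonneg[of x]
    by (auto simp: surplus_fraction_def surplus_def overlap_def algebra_simps)
  then show ?thesis
    using a_nonneg[of x] surplus_fraction_le_1[of x] by (simp flip: ennreal_mult)
qed

lemma nn_integral_\<mu>: "f \<in> borel_measurable \<rho> \<Longrightarrow> integral\<^sup>N \<mu> f = (\<integral>\<^sup>+x. ennreal (a x) * f x \<partial>\<rho>)"
  unfolding \<mu>_density by (rule nn_integral_density) auto

lemma nn_integral_\<nu>: "f \<in> borel_measurable \<rho> \<Longrightarrow> integral\<^sup>N \<nu> f = (\<integral>\<^sup>+x. ennreal (b x) * f x \<partial>\<rho>)"
  unfolding \<nu>_density by (rule nn_integral_density) auto

lemma nn_integral_a: "(\<integral>\<^sup>+x. ennreal (a x) \<partial>\<rho>) = 1"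
  using nn_integral_\<mu>[of "\<lambda>_. 1"] prob_space.emeasure_space_1[OF prob_\<mu>] by simp

lemma nn_integral_b: "(\<integral>\<^sup>+x. ennreal (b x) \<partial>\<rho>) = 1"
  using nn_integral_\<nu>[of "\<lambda>_. 1"] prob_space.emeasure_space_1[OF prob_\<nu>] by (simp add: \<nu>_density)

lemma nn_integral_overlap_finite: "(\<integral>\<^sup>+x. ennreal (overlap x) \<partial>\<rho>) \<noteq> \<infinity>"
proof -
  have "(\<integral>\<^sup>+x. ennreal (overlap x) \<partial>\<rho>) \<le> (\<integral>\<^sup>+x. ennreal (a x) \<partial>\<rho>)"
    by (intro nn_integral_mono) (simp add: ennreal_a_eq)
  then show ?thesis by (auto simp: nn_integral_a top_unique)
qed

text \<open>Both densities have total mass 1 and share the overlap, so surplus and deficit have equal mass.\<close>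
lemma nn_integral_surplus_eq_deficit:
  "(\<integral>\<^sup>+x. ennreal (surplus x) \<partial>\<rho>) = (\<integral>\<^sup>+x. ennreal (deficit x) \<partial>\<rho>)"
proof -
  have "(\<integral>\<^sup>+x. ennreal (a x) \<partial>\<rho>) = (\<integral>\<^sup>+x. ennreal (b x) \<partial>\<rho>)"
    by (simp add: nn_integral_a nn_integral_b)
  then have "(\<integral>\<^sup>+x. ennreal (overlap x) \<partial>\<rho>) + (\<integral>\<^sup>+x. ennreal (surplus x) \<partial>\<rho>)
      = (\<integral>\<^sup>+x. ennreal (overlap x) \<partial>\<rho>) + (\<integral>\<^sup>+x. ennreal (deficit x) \<partial>\<rho>)"
    by (simp add: ennreal_a_eq ennreal_b_eq nn_integral_add)
  then show ?thesis
    using nn_integral_overlap_finite by (simp add: ennreal_add_left_cancel)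
qed

lemma nn_integral_surplus_le:
  assumes "\<And>A. A \<in> sets \<mu> \<Longrightarrow> measure \<mu> A \<le> measure \<nu> A + \<tau>"
  shows "(\<integral>\<^sup>+x. ennreal (surplus x) \<partial>\<rho>) \<le> ennreal \<tau>"
proof -
  define A where "A = {x \<in> space \<rho>. b x < a x}"
  have A[measurable]: "A \<in> sets \<rho>" unfolding A_def by measurable
  have b_A_le: "(\<integral>\<^sup>+x. ennreal (b x) * indicator A x \<partial>\<rho>) \<le> 1"
    unfolding nn_integral_b[symmetric] by (rule nn_integral_mono) (simp split: split_indicator)
  have "(\<integral>\<^sup>+x. ennreal (surplus x) \<partial>\<rho>)
      = (\<integral>\<^sup>+x. ennreal (a x) * indicator A x - ennreal (b x) * indicator A x \<partial>\<rho>)"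
    by (rule nn_integral_cong)
      (auto simp: A_def surplus_def ennreal_minus b_nonneg ennreal_eq_0_iff split: split_indicator)
  also have "\<dots> = (\<integral>\<^sup>+x. ennreal (a x) * indicator A x \<partial>\<rho>) - (\<integral>\<^sup>+x. ennreal (b x) * indicator A x \<partial>\<rho>)"
    using b_A_le by (intro nn_integral_diff)
      (auto simp: A_def top_unique intro!: AE_I2 ennreal_leI split: split_indicator)
  also have "\<dots> = emeasure \<mu> A - emeasure \<nu> A"
    by (simp add: \<mu>_density \<nu>_density emeasure_density)
  also have "\<dots> = ennreal (measure \<mu> A - measure \<nu> A)"
    using prob_space.finite_measure[OF prob_\<mu>] prob_space.finite_measure[OF prob_\<nu>]
    by (simp add: finite_measure.emeasure_eq_measure ennreal_minus)
  also have "\<dots> \<le> ennreal \<tau>"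
    using assms[of A] by (intro ennreal_leI) (simp add: sets_\<mu>)
  finally show ?thesis .
qed

lemma nn_integral_surplus_fraction:
  "(\<integral>\<^sup>+x. ennreal (surplus_fraction x) \<partial>\<mu>) = (\<integral>\<^sup>+x. ennreal (surplus x) \<partial>\<rho>)"
  by (simp add: nn_integral_\<mu> ennreal_a_times_surplus_fraction)

text \<open>Splitting the mass of \<mu> into the overlap, which is dominated by \<nu>, and the surplus.\<close>
lemma nn_integral_le_plus_surplus:
  assumes f: "f \<in> borel_measurable \<mu>"
  shows "(\<integral>\<^sup>+x. f x \<partial>\<mu>) \<le> (\<integral>\<^sup>+x. f x \<partial>\<nu>) + (\<integral>\<^sup>+x. f x * ennreal (surplus_fraction x) \<partial>\<mu>)"
proof -
  have [measurable]: "f \<in> borel_measurable \<rho>" using f by (simp add: measurable_\<mu>_iff)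
  have "(\<integral>\<^sup>+x. f x \<partial>\<mu>)
      = (\<integral>\<^sup>+x. ennreal (overlap x) * f x + ennreal (a x) * (f x * ennreal (surplus_fraction x)) \<partial>\<rho>)"
    unfolding nn_integral_\<mu>[OF f[unfolded measurable_\<mu>_iff]]
  proof (rule nn_integral_cong)
    fix x
    have "ennreal (a x) * f x = (ennreal (overlap x) + ennreal (a x) * ennreal (surplus_fraction x)) * f x"
      by (subst ennreal_a_times_surplus_fraction) (simp only: ennreal_a_eq)
    then show "ennreal (a x) * f x
        = ennreal (overlap x) * f x + ennreal (a x) * (f x * ennreal (surplus_fraction x))"
      by (simp add: algebra_simps)
  qed
  also have "\<dots> = (\<integral>\<^sup>+x. ennreal (overlap x) * f x \<partial>\<rho>)
      + (\<integral>\<^sup>+x. ennreal (a x) * (f x * ennreal (surplus_fraction x)) \<partial>\<rho>)"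
    by (rule nn_integral_add) auto
  also have "\<dots> \<le> (\<integral>\<^sup>+x. ennreal (b x) * f x \<partial>\<rho>)
      + (\<integral>\<^sup>+x. ennreal (a x) * (f x * ennreal (surplus_fraction x)) \<partial>\<rho>)"
    by (intro add_right_mono nn_integral_mono mult_right_mono ennreal_leI) (auto simp: overlap_def)
  also have "\<dots> = (\<integral>\<^sup>+x. f x \<partial>\<nu>) + (\<integral>\<^sup>+x. f x * ennreal (surplus_fraction x) \<partial>\<mu>)"
    by (simp add: nn_integral_\<mu> nn_integral_\<nu>)
  finally show ?thesis .
qed

definition deficit_mass :: ennreal where
  "deficit_mass = (\<integral>\<^sup>+x. ennreal (deficit x) \<partial>\<rho>)"

definition residual :: "'a measure" where
  "residual = (if deficit_mass = 0 then \<nu>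
     else density \<rho> (\<lambda>x. ennreal (deficit x / enn2real deficit_mass)))"

lemma deficit_mass_finite: "deficit_mass \<noteq> \<infinity>"
proof -
  have "deficit_mass \<le> (\<integral>\<^sup>+x. ennreal (b x) \<partial>\<rho>)"
    unfolding deficit_mass_def by (intro nn_integral_mono) (simp add: ennreal_b_eq)
  then show ?thesis by (auto simp: nn_integral_b top_unique)
qed

lemma sets_residual: "sets residual = sets \<rho>"
  by (simp add: residual_def sets_\<nu>)

lemma deficit_mass_times_residual:
  assumes B: "B \<in> sets \<rho>"
  shows "deficit_mass * emeasure residual B = (\<integral>\<^sup>+x. ennreal (deficit x) * indicator B x \<partial>\<rho>)"
proof (cases "deficit_mass = 0")
  case True
  have "(\<integral>\<^sup>+x. ennreal (deficit x) * indicator B x \<partial>\<rho>) \<le> deficit_mass"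
    unfolding deficit_mass_def by (rule nn_integral_mono) (simp split: split_indicator)
  then show ?thesis using True by simp
next
  case False
  define c where "c = enn2real deficit_mass"
  have c: "c > 0" "deficit_mass = ennreal c"
    using False deficit_mass_finite unfolding c_def
    by (auto simp: enn2real_positive_iff less_top zero_less_iff_neq_zero)
  have "deficit_mass * emeasure residual B = ennreal c * (\<integral>\<^sup>+x. ennreal (deficit x / c) * indicator B x \<partial>\<rho>)"
    using False B c(1) by (simp add: residual_def emeasure_density c(2) flip: c_def)
  also have "\<dots> = (\<integral>\<^sup>+x. ennreal c * ennreal (deficit x / c) * indicator B x \<partial>\<rho>)"
    using B by (subst nn_integral_cmult[symmetric]) (auto simp: mult.assoc)
  also have "\<dots> = (\<integral>\<^sup>+x. ennreal (deficit x) * indicator B x \<partial>\<rho>)"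
    using c(1) by (intro nn_integral_cong) (simp add: deficit_nonneg flip: ennreal_mult)
  finally show ?thesis .
qed

lemma prob_residual: "prob_space residual"
proof (cases "deficit_mass = 0")
  case True
  then show ?thesis by (simp add: residual_def prob_\<nu>)
next
  case False
  have "space residual = space \<rho>"
    using sets_residual by (rule sets_eq_imp_space_eq)
  have "(\<integral>\<^sup>+x. ennreal (deficit x) * indicator (space \<rho>) x \<partial>\<rho>) = deficit_mass"
    unfolding deficit_mass_def by (rule nn_integral_cong) simp
  with \<open>space residual = space \<rho>\<close>
  have "deficit_mass * emeasure residual (space residual) = deficit_mass * 1"
    using deficit_mass_times_residual[of "space \<rho>"] by simp
  then show ?thesis
    using False deficit_mass_finite unfolding ennreal_mult_cancel_left by (simp add: prob_spaceI)
qed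

text \<open>The maximal coupling of \<mu> and \<nu>, as a kernel acting on samples of \<mu>.\<close>
definition transport_kernel :: "'a \<Rightarrow> 'a measure" where
  "transport_kernel y = measure_pmf (bernoulli_pmf (surplus_fraction y))
     \<bind> (\<lambda>c. if c then residual else return \<mu> y)"

lemma residual_in_prob_algebra: "residual \<in> space (prob_algebra \<mu>)"
  using prob_residual by (simp add: space_prob_algebra sets_residual sets_\<mu>)

lemma measurable_transport_kernel: "transport_kernel \<in> \<mu> \<rightarrow>\<^sub>M prob_algebra \<mu>"
  unfolding transport_kernel_def
proof (rule measurable_bind_prob_space2)
  show "(\<lambda>y. measure_pmf (bernoulli_pmf (surplus_fraction y))) \<in> \<mu> \<rightarrow>\<^sub>M prob_algebra (count_space UNIV)"
    by (intro measurable_bernoulli_pmf surplus_fraction_measurable)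
      (simp add: surplus_fraction_nonneg surplus_fraction_le_1)
  have "(\<lambda>p. if snd p then residual else return \<mu> (fst p)) \<in> \<mu> \<Otimes>\<^sub>M count_space UNIV \<rightarrow>\<^sub>M prob_algebra \<mu>"
    using residual_in_prob_algebra by measurable
  then show "(\<lambda>(y, c). if c then residual else return \<mu> y) \<in> \<mu> \<Otimes>\<^sub>M count_space UNIV \<rightarrow>\<^sub>M prob_algebra \<mu>"
    by (rule measurable_cong[THEN iffD1, rotated]) auto
qed

lemma emeasure_transport_kernel:
  assumes "B \<in> sets \<mu>" "y \<in> space \<mu>"
  shows "emeasure (transport_kernel y) B
    = emeasure residual B * ennreal (surplus_fraction y) + indicator B y * ennreal (1 - surplus_fraction y)"
proof -
  have kernel: "(\<lambda>c. if c then residual else return \<mu> y) \<in> count_space UNIV \<rightarrow>\<^sub>M prob_algebra \<mu>"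
    using residual_in_prob_algebra assms(2)
    by (auto simp: measurable_count_space_eq1 space_prob_algebra prob_space_return)
  have "emeasure (transport_kernel y) B
      = (\<integral>\<^sup>+c. emeasure (if c then residual else return \<mu> y) B \<partial>measure_pmf (bernoulli_pmf (surplus_fraction y)))"
    unfolding transport_kernel_def
    by (rule emeasure_bind_prob_algebra[OF _ kernel assms(1)])
      (simp add: space_prob_algebra measure_pmf.prob_space_axioms)
  also have "\<dots> = emeasure residual B * ennreal (surplus_fraction y) + indicator B y * ennreal (1 - surplus_fraction y)"
    using assms surplus_fraction_nonneg[of y] surplus_fraction_le_1[of y] by simp
  finally show ?thesis .
qed

lemma emeasure_transport_kernel_le:
  assumes "B \<in> sets \<mu>" "y \<in> space \<mu>"
  shows "emeasure (transport_kernel y) B \<le> indicator B y + ennreal (surplus_fraction y)"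
proof -
  have "emeasure residual B * ennreal (surplus_fraction y) \<le> 1 * ennreal (surplus_fraction y)"
    by (intro mult_right_mono) (simp_all add: prob_space.emeasure_le_1[OF prob_residual])
  moreover have "indicator B y * ennreal (1 - surplus_fraction y) \<le> indicator B y * 1"
    by (intro mult_left_mono) (simp_all add: surplus_fraction_nonneg)
  ultimately show ?thesis
    unfolding emeasure_transport_kernel[OF assms] by (metis add.commute add_mono mult_1 mult_1_right)
qed

text \<open>The kept part of \<mu> is the overlap and the resampled part has mass equal to the deficit.\<close>
lemma bind_transport_kernel: "\<mu> \<bind> transport_kernel = \<nu>"
proof (rule measure_eqI)
  have "sets (\<mu> \<bind> transport_kernel) = sets \<mu>"
    using prob_space.not_empty[OF prob_\<mu>] measurable_transport_kernel
    by (intro sets_bind sets_kernel[OF measurable_prob_algebraD]) auto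
  then show sets_eq: "sets (\<mu> \<bind> transport_kernel) = sets \<nu>"
    by (simp add: sets_\<mu> sets_\<nu>)
  fix B assume "B \<in> sets (\<mu> \<bind> transport_kernel)"
  then have B[measurable]: "B \<in> sets \<rho>" using sets_eq sets_\<nu> by simp
  have "emeasure (\<mu> \<bind> transport_kernel) B = (\<integral>\<^sup>+y. emeasure (transport_kernel y) B \<partial>\<mu>)"
    by (rule emeasure_bind_prob_algebra[OF _ measurable_transport_kernel])
      (use prob_\<mu> B in \<open>auto simp: space_prob_algebra sets_\<mu>\<close>)
  also have "\<dots> = (\<integral>\<^sup>+y. emeasure residual B * ennreal (surplus_fraction y)
      + indicator B y * ennreal (1 - surplus_fraction y) \<partial>\<mu>)"
    by (rule nn_integral_cong) (simp add: emeasure_transport_kernel sets_\<mu>)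
  also have "\<dots> = (\<integral>\<^sup>+y. ennreal (a y) * (emeasure residual B * ennreal (surplus_fraction y)
      + indicator B y * ennreal (1 - surplus_fraction y)) \<partial>\<rho>)"
    by (rule nn_integral_\<mu>) measurable
  also have "\<dots> = (\<integral>\<^sup>+y. emeasure residual B * ennreal (surplus y) + ennreal (overlap y) * indicator B y \<partial>\<rho>)"
    unfolding ennreal_a_times_surplus_fraction[symmetric] ennreal_a_times_one_minus_surplus_fraction[symmetric]
    by (rule nn_integral_cong) (simp only: algebra_simps)
  also have "\<dots> = emeasure residual B * deficit_mass + (\<integral>\<^sup>+y. ennreal (overlap y) * indicator B y \<partial>\<rho>)"
    by (simp add: nn_integral_add nn_integral_cmult deficit_mass_def nn_integral_surplus_eq_deficit)
  also have "\<dots> = (\<integral>\<^sup>+y. ennreal (deficit y) * indicator B y \<partial>\<rho>)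
      + (\<integral>\<^sup>+y. ennreal (overlap y) * indicator B y \<partial>\<rho>)"
    using B by (simp add: deficit_mass_times_residual mult.commute[of "emeasure residual B"])
  also have "\<dots> = (\<integral>\<^sup>+y. ennreal (b y) * indicator B y \<partial>\<rho>)"
    by (subst nn_integral_add[symmetric]) (auto intro!: nn_integral_cong simp: ennreal_b_eq distrib_right)
  also have "\<dots> = emeasure \<nu> B"
    by (simp add: \<nu>_density emeasure_density)
  finally show "emeasure (\<mu> \<bind> transport_kernel) B = emeasure \<nu> B" .
qed

end

lemma two_densities_exist:
  assumes "prob_space \<mu>" "prob_space \<nu>" "sets \<nu> = sets \<mu>"
  obtains \<rho> a b where "two_densities \<rho> \<mu> \<nu> a b"
proof -
  obtain \<rho> a b where "finite_measure \<rho>"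
    and a: "a \<in> borel_measurable \<rho>" "\<And>x. a x \<ge> 0" "\<mu> = density \<rho> (\<lambda>x. ennreal (a x))"
    and b: "b \<in> borel_measurable \<rho>" "\<And>x. b x \<ge> 0" "\<nu> = density \<rho> (\<lambda>x. ennreal (b x))"
    using common_real_densities_exist[OF assms(1,2)[THEN prob_space.finite_measure] assms(3)] by metis
  then show ?thesis
    using that two_densities.intro[OF assms(1,2) a(1) b(1) a(2) b(2) a(3) b(3)] by blast
qed

lemma surplus_fraction_exists:
  assumes "prob_space \<mu>" "prob_space \<nu>" "sets \<nu> = sets \<mu>"
    and "\<And>A. A \<in> sets \<mu> \<Longrightarrow> measure \<mu> A \<le> measure \<nu> A + \<tau>"
  obtains g where "g \<in> borel_measurable \<mu>" "\<And>x. 0 \<le> g x" "\<And>x. g x \<le> 1"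
    "(\<integral>\<^sup>+x. ennreal (g x) \<partial>\<mu>) \<le> ennreal \<tau>"
    "\<And>f. f \<in> borel_measurable \<mu> \<Longrightarrow> (\<integral>\<^sup>+x. f x \<partial>\<mu>) \<le> (\<integral>\<^sup>+x. f x \<partial>\<nu>) + (\<integral>\<^sup>+x. f x * ennreal (g x) \<partial>\<mu>)"
proof -
  obtain \<rho> a b where "two_densities \<rho> \<mu> \<nu> a b"
    using two_densities_exist[OF assms(1-3)] .
  then interpret two_densities \<rho> \<mu> \<nu> a b .
  show ?thesis
    by (rule that[OF surplus_fraction_measurable surplus_fraction_nonneg surplus_fraction_le_1
      _ nn_integral_le_plus_surplus])
      (simp only: nn_integral_surplus_fraction nn_integral_surplus_le[OF assms(4)])
qed

lemma transport_kernel_exists: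
  assumes "prob_space \<mu>" "prob_space \<nu>" "sets \<nu> = sets \<mu>"
    and "\<And>A. A \<in> sets \<mu> \<Longrightarrow> measure \<mu> A \<le> measure \<nu> A + \<tau>"
  obtains K g where "K \<in> \<mu> \<rightarrow>\<^sub>M prob_algebra \<mu>" "\<mu> \<bind> K = \<nu>"
    "g \<in> borel_measurable \<mu>" "(\<integral>\<^sup>+x. ennreal (g x) \<partial>\<mu>) \<le> ennreal \<tau>"
    "\<And>y B. y \<in> space \<mu> \<Longrightarrow> B \<in> sets \<mu> \<Longrightarrow> emeasure (K y) B \<le> indicator B y + ennreal (g y)"
proof -
  obtain \<rho> a b where "two_densities \<rho> \<mu> \<nu> a b"
    using two_densities_exist[OF assms(1-3)] .
  then interpret two_densities \<rho> \<mu> \<nu> a b .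
  show ?thesis
    by (rule that[OF measurable_transport_kernel bind_transport_kernel surplus_fraction_measurable
      _ emeasure_transport_kernel_le])
      (simp only: nn_integral_surplus_fraction nn_integral_surplus_le[OF assms(4)])
qed

section \<open>Kernels acting on the second coordinate\<close>

definition kernel_on_snd :: "'a measure \<Rightarrow> 'b measure \<Rightarrow> ('b \<Rightarrow> 'b measure) \<Rightarrow> 'a \<times> 'b \<Rightarrow> ('a \<times> 'b) measure" where
  "kernel_on_snd M N K q = distr (K (snd q)) (M \<Otimes>\<^sub>M N) (Pair (fst q))"

context
  fixes M :: "'a measure" and N :: "'b measure" and K :: "'b \<Rightarrow> 'b measure"
  assumes K: "K \<in> N \<rightarrow>\<^sub>M prob_algebra N"
begin

lemma measurable_kernel_on_snd: "kernel_on_snd M N K \<in> M \<Otimes>\<^sub>M N \<rightarrow>\<^sub>M prob_algebra (M \<Otimes>\<^sub>M N)"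
  unfolding kernel_on_snd_def
  by (rule measurable_distr_prob_space2[OF measurable_compose[OF measurable_snd K]]) measurable

private lemma sets_K: "y \<in> space N \<Longrightarrow> sets (K y) = sets N"
  and prob_space_K: "y \<in> space N \<Longrightarrow> prob_space (K y)"
  using measurable_space[OF K] by (simp_all add: space_prob_algebra)

private lemma measurable_Pair_kernel_on_snd:
  "q \<in> space (M \<Otimes>\<^sub>M N) \<Longrightarrow> Pair (fst q) \<in> K (snd q) \<rightarrow>\<^sub>M M \<Otimes>\<^sub>M N"
  by (subst measurable_cong_sets[OF sets_K refl]) (auto simp: space_pair_measure)

lemma distr_fst_kernel_on_snd:
  "q \<in> space (M \<Otimes>\<^sub>M N) \<Longrightarrow> distr (kernel_on_snd M N K q) M fst = return M (fst q)"
  unfolding kernel_on_snd_def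
  by (subst distr_distr[OF _ measurable_Pair_kernel_on_snd])
    (auto simp: comp_def space_pair_measure intro!: prob_space.distr_const prob_space_K)

lemma distr_snd_kernel_on_snd:
  "q \<in> space (M \<Otimes>\<^sub>M N) \<Longrightarrow> distr (kernel_on_snd M N K q) N snd = K (snd q)"
  unfolding kernel_on_snd_def
  by (subst distr_distr[OF _ measurable_Pair_kernel_on_snd])
    (auto simp: comp_def space_pair_measure sets_K intro: distr_id2)

lemma emeasure_kernel_on_snd:
  assumes "q \<in> space (M \<Otimes>\<^sub>M N)" "A \<in> sets (M \<Otimes>\<^sub>M N)"
  shows "emeasure (kernel_on_snd M N K q) A = emeasure (K (snd q)) (Pair (fst q) -` A \<inter> space N)"
  using assms measurable_Pair_kernel_on_snd[OF assms(1)] sets_eq_imp_space_eq[OF sets_K]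
  unfolding kernel_on_snd_def by (subst emeasure_distr) (auto simp: space_pair_measure)

context
  fixes \<mu> :: "('a \<times> 'b) measure"
  assumes \<mu>: "\<mu> \<in> space (prob_algebra (M \<Otimes>\<^sub>M N))"
begin

private lemma sets_\<mu>: "sets \<mu> = sets (M \<Otimes>\<^sub>M N)" and not_empty_\<mu>: "space \<mu> \<noteq> {}"
  using \<mu> by (auto simp: space_prob_algebra prob_space.not_empty)

private lemma space_\<mu>: "space \<mu> = space (M \<Otimes>\<^sub>M N)"
  using sets_\<mu> by (rule sets_eq_imp_space_eq)

private lemma measurable_kernel_on_snd_\<mu>: "kernel_on_snd M N K \<in> \<mu> \<rightarrow>\<^sub>M subprob_algebra (M \<Otimes>\<^sub>M N)"
  using measurable_prob_algebraD[OF measurable_kernel_on_snd] by (simp cong: measurable_cong_sets add: sets_\<mu>)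

lemma distr_fst_bind_kernel_on_snd: "distr (\<mu> \<bind> kernel_on_snd M N K) M fst = distr \<mu> M fst"
proof -
  have "distr (\<mu> \<bind> kernel_on_snd M N K) M fst = \<mu> \<bind> (\<lambda>q. distr (kernel_on_snd M N K q) M fst)"
    by (rule distr_bind[OF measurable_kernel_on_snd_\<mu> not_empty_\<mu>]) simp
  also have "\<dots> = \<mu> \<bind> (\<lambda>q. return M (fst q))"
    by (rule bind_cong[OF refl]) (simp add: space_\<mu> distr_fst_kernel_on_snd)
  also have "\<dots> = distr \<mu> M fst"
    by (rule bind_return_distr'[OF not_empty_\<mu>]) (simp cong: measurable_cong_sets add: sets_\<mu>)
  finally show ?thesis .
qed

lemma distr_snd_bind_kernel_on_snd: "distr (\<mu> \<bind> kernel_on_snd M N K) N snd = distr \<mu> N snd \<bind> K"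
proof -
  have "distr (\<mu> \<bind> kernel_on_snd M N K) N snd = \<mu> \<bind> (\<lambda>q. distr (kernel_on_snd M N K q) N snd)"
    by (rule distr_bind[OF measurable_kernel_on_snd_\<mu> not_empty_\<mu>]) simp
  also have "\<dots> = \<mu> \<bind> (\<lambda>q. K (snd q))"
    by (rule bind_cong[OF refl]) (simp add: space_\<mu> distr_snd_kernel_on_snd)
  also have "\<dots> = distr \<mu> N snd \<bind> K"
    by (rule bind_distr[symmetric, OF _ measurable_prob_algebraD[OF K] not_empty_\<mu>])
      (simp cong: measurable_cong_sets add: sets_\<mu>)
  finally show ?thesis .
qed

lemma emeasure_bind_kernel_on_snd_le:
  assumes r: "r \<in> borel_measurable N"
    and K_le: "\<And>y B. y \<in> space N \<Longrightarrow> B \<in> sets N \<Longrightarrow> emeasure (K y) B \<le> indicator B y + ennreal (r y)"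
    and A: "A \<in> sets (M \<Otimes>\<^sub>M N)"
  shows "emeasure (\<mu> \<bind> kernel_on_snd M N K) A \<le> emeasure \<mu> A + (\<integral>\<^sup>+y. ennreal (r y) \<partial>distr \<mu> N snd)"
proof -
  have "emeasure (\<mu> \<bind> kernel_on_snd M N K) A = (\<integral>\<^sup>+q. emeasure (kernel_on_snd M N K q) A \<partial>\<mu>)"
    by (rule emeasure_bind_prob_algebra[OF \<mu> measurable_kernel_on_snd A])
  also have "\<dots> \<le> (\<integral>\<^sup>+q. indicator A q + ennreal (r (snd q)) \<partial>\<mu>)"
  proof (rule nn_integral_mono)
    fix q assume "q \<in> space \<mu>"
    then have q: "q \<in> space (M \<Otimes>\<^sub>M N)" and y: "snd q \<in> space N"
      by (auto simp: space_\<mu> space_pair_measure)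
    define B where "B = Pair (fst q) -` A \<inter> space N"
    have "B \<in> sets N"
      using q unfolding B_def by (intro measurable_sets[OF _ A]) (auto simp: space_pair_measure)
    then have "emeasure (kernel_on_snd M N K q) A \<le> indicator B (snd q) + ennreal (r (snd q))"
      unfolding emeasure_kernel_on_snd[OF q A] B_def[symmetric] by (rule K_le[OF y])
    also have "indicator B (snd q) = (indicator A q :: ennreal)"
      using y by (simp add: B_def indicator_def)
    finally show "emeasure (kernel_on_snd M N K q) A \<le> indicator A q + ennreal (r (snd q))" .
  qed
  also have "\<dots> = emeasure \<mu> A + (\<integral>\<^sup>+y. ennreal (r y) \<partial>distr \<mu> N snd)"
    using A r by (simp add: nn_integral_add sets_\<mu> nn_integral_distr cong: measurable_cong_sets)
  finally show ?thesis .
qed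

end

end

section \<open>Weighted distortion and uniform integrability\<close>

lemma distr_bind_eq_distr:
  assumes M: "prob_space M" and K: "K \<in> M \<rightarrow>\<^sub>M prob_algebra T"
    and h: "h \<in> T \<rightarrow>\<^sub>M N" and Z: "Z \<in> M \<rightarrow>\<^sub>M N"
    and K_h: "\<And>\<omega>. \<omega> \<in> space M \<Longrightarrow> distr (K \<omega>) N h = return N (Z \<omega>)"
  shows "distr (M \<bind> K) N h = distr M N Z"
proof -
  have not_empty: "space M \<noteq> {}"
    using M by (simp add: prob_space.not_empty)
  have "distr (M \<bind> K) N h = M \<bind> (\<lambda>\<omega>. distr (K \<omega>) N h)"
    by (rule distr_bind[OF measurable_prob_algebraD[OF K] not_empty h])
  also have "\<dots> = M \<bind> (\<lambda>\<omega>. return N (Z \<omega>))"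
    by (intro bind_cong refl K_h)
  also have "\<dots> = distr M N Z"
    by (rule bind_return_distr'[OF not_empty Z])
  finally show ?thesis .
qed

text \<open>Realise the weight g as the probability of an event B, by attaching to each outcome a
  coin that shows True with probability g.\<close>
lemma weight_as_event:
  fixes X Y :: "'a \<Rightarrow> 'x::topological_space"
  assumes M: "prob_space M" and X[measurable]: "X \<in> M \<rightarrow>\<^sub>M borel" and Y[measurable]: "Y \<in> M \<rightarrow>\<^sub>M borel"
    and g[measurable]: "g \<in> borel_measurable M" and g_01: "\<And>\<omega>. 0 \<le> g \<omega> \<and> g \<omega> \<le> 1"
  obtains N B where "prob_space N" "sets N = sets (borel \<Otimes>\<^sub>M borel \<Otimes>\<^sub>M count_space (UNIV :: bool set))"
    "B \<in> sets N" "emeasure N B = (\<integral>\<^sup>+\<omega>. ennreal (g \<omega>) \<partial>M)"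
    "distr N borel fst = distr M borel X" "distr N borel (\<lambda>\<eta>. fst (snd \<eta>)) = distr M borel Y"
    "\<And>f. f \<in> borel_measurable (borel \<Otimes>\<^sub>M borel) \<Longrightarrow>
      (\<integral>\<^sup>+\<eta>. f (fst \<eta>, fst (snd \<eta>)) * indicator B \<eta> \<partial>N) = (\<integral>\<^sup>+\<omega>. f (X \<omega>, Y \<omega>) * ennreal (g \<omega>) \<partial>M)"
proof -
  let ?T = "(borel :: 'x measure) \<Otimes>\<^sub>M (borel :: 'x measure) \<Otimes>\<^sub>M count_space (UNIV :: bool set)"
  define coin where "coin \<omega> = distr (measure_pmf (bernoulli_pmf (g \<omega>))) ?T (\<lambda>b. (X \<omega>, Y \<omega>, b))" for \<omega>
  have coin_measurable: "coin \<in> M \<rightarrow>\<^sub>M prob_algebra ?T"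
    unfolding coin_def
    by (rule measurable_distr_prob_space2[OF measurable_bernoulli_pmf[OF g]]) (simp_all add: g_01)
  have M_in: "M \<in> space (prob_algebra M)"
    using M by (simp add: space_prob_algebra)
  define N where "N = M \<bind> coin"
  have prob_N: "prob_space N" and sets_N: "sets N = sets ?T"
    unfolding N_def using prob_space_bind'[OF M_in coin_measurable] sets_bind'[OF M_in coin_measurable]
    by simp_all
  have coin_pair: "(\<lambda>b. (X \<omega>, Y \<omega>, b)) \<in> measure_pmf (bernoulli_pmf (g \<omega>)) \<rightarrow>\<^sub>M ?T" for \<omega>
    by (simp add: space_pair_measure)
  have law: "distr N borel h = distr M borel Z"
    if [measurable]: "h \<in> ?T \<rightarrow>\<^sub>M borel" and h_coin: "\<And>\<omega> b. h (X \<omega>, Y \<omega>, b) = Z \<omega>" for h Z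
  proof (unfold N_def, rule distr_bind_eq_distr[OF M coin_measurable that(1)])
    have "Z = (\<lambda>\<omega>. h (X \<omega>, Y \<omega>, True))" using h_coin by simp
    then show "Z \<in> M \<rightarrow>\<^sub>M borel" by simp
    show "distr (coin \<omega>) borel h = return borel (Z \<omega>)" for \<omega>
      unfolding coin_def distr_distr[OF that(1) coin_pair]
      by (simp add: comp_def h_coin measure_pmf.distr_const)
  qed
  define B where "B = (UNIV :: 'x set) \<times> (UNIV :: 'x set) \<times> {True}"
  have B[measurable]: "B \<in> sets ?T" unfolding B_def by (intro pair_measureI) auto
  have emeasure_coin_B: "emeasure (coin \<omega>) B = ennreal (g \<omega>)" for \<omega>
  proof -
    have "(\<lambda>b. (X \<omega>, Y \<omega>, b)) -` B \<inter> space (measure_pmf (bernoulli_pmf (g \<omega>))) = {True}"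
      by (auto simp: B_def)
    then show ?thesis
      unfolding coin_def using g_01[of \<omega>] by (simp add: emeasure_distr[OF coin_pair B] emeasure_bernoulli_pmf)
  qed
  show ?thesis
  proof (rule that[OF prob_N sets_N])
    show "B \<in> sets N" by (simp add: sets_N)
    show "emeasure N B = (\<integral>\<^sup>+\<omega>. ennreal (g \<omega>) \<partial>M)"
      unfolding N_def by (simp add: emeasure_bind_prob_algebra[OF M_in coin_measurable B] emeasure_coin_B)
    show "distr N borel fst = distr M borel X" "distr N borel (\<lambda>\<eta>. fst (snd \<eta>)) = distr M borel Y"
      by (rule law; simp)+
    fix f :: "'x \<times> 'x \<Rightarrow> ennreal" assume [measurable]: "f \<in> borel_measurable (borel \<Otimes>\<^sub>M borel)"
    have integrand: "(\<lambda>\<eta>. f (fst \<eta>, fst (snd \<eta>)) * indicator B \<eta>) \<in> borel_measurable ?T"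
      by measurable
    have "(\<integral>\<^sup>+\<eta>. f (fst \<eta>, fst (snd \<eta>)) * indicator B \<eta> \<partial>N)
        = (\<integral>\<^sup>+\<omega>. (\<integral>\<^sup>+\<eta>. f (fst \<eta>, fst (snd \<eta>)) * indicator B \<eta> \<partial>coin \<omega>) \<partial>M)"
      unfolding N_def by (rule nn_integral_bind[OF integrand measurable_prob_algebraD[OF coin_measurable]])
    also have "\<dots> = (\<integral>\<^sup>+\<omega>. f (X \<omega>, Y \<omega>) * ennreal (g \<omega>) \<partial>M)"
      unfolding coin_def using g_01
      by (intro nn_integral_cong, subst nn_integral_distr[OF coin_pair]) (simp_all add: integrand B_def)
    finally show "(\<integral>\<^sup>+\<eta>. f (fst \<eta>, fst (snd \<eta>)) * indicator B \<eta> \<partial>N) = (\<integral>\<^sup>+\<omega>. f (X \<omega>, Y \<omega>) * ennreal (g \<omega>) \<partial>M)" .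
  qed
qed

lemma nn_integral_weighted_le_ui_sup:
  fixes d :: "'x::topological_space \<Rightarrow> 'x \<Rightarrow> real"
  assumes M: "prob_space M"
    and X: "X \<in> M \<rightarrow>\<^sub>M borel" and Y: "Y \<in> M \<rightarrow>\<^sub>M borel"
    and law_X: "distr M borel X = pX" and law_Y: "distr M borel Y = pX"
    and d: "(\<lambda>(x, y). d x y) \<in> borel_measurable (borel \<Otimes>\<^sub>M borel)"
    and g: "g \<in> borel_measurable M" and g_01: "\<And>\<omega>. 0 \<le> g \<omega> \<and> g \<omega> \<le> 1"
    and g_int: "(\<integral>\<^sup>+\<omega>. ennreal (g \<omega>) \<partial>M) \<le> ennreal \<tau>" and "0 \<le> \<tau>"
  shows "(\<integral>\<^sup>+\<omega>. ennreal (d (X \<omega>) (Y \<omega>)) * ennreal (g \<omega>) \<partial>M) \<le> ui_sup d pX \<tau>"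
proof -
  obtain N B where N: "prob_space N" "sets N = sets (borel \<Otimes>\<^sub>M borel \<Otimes>\<^sub>M count_space (UNIV :: bool set))"
    and B: "B \<in> sets N" "emeasure N B = (\<integral>\<^sup>+\<omega>. ennreal (g \<omega>) \<partial>M)"
    and law: "distr N borel fst = distr M borel X" "distr N borel (\<lambda>\<eta>. fst (snd \<eta>)) = distr M borel Y"
    and integral: "\<And>f. f \<in> borel_measurable (borel \<Otimes>\<^sub>M borel) \<Longrightarrow>
      (\<integral>\<^sup>+\<eta>. f (fst \<eta>, fst (snd \<eta>)) * indicator B \<eta> \<partial>N) = (\<integral>\<^sup>+\<omega>. f (X \<omega>, Y \<omega>) * ennreal (g \<omega>) \<partial>M)"
    using weight_as_event[OF M X Y g g_01] by blast
  have "(\<lambda>p. ennreal (d (fst p) (snd p))) \<in> borel_measurable (borel \<Otimes>\<^sub>M borel)"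
    using d by measurable
  from integral[OF this] have integral_d:
    "(\<integral>\<^sup>+\<eta>. ennreal (d (fst \<eta>) (fst (snd \<eta>))) * indicator B \<eta> \<partial>N)
      = (\<integral>\<^sup>+\<omega>. ennreal (d (X \<omega>) (Y \<omega>)) * ennreal (g \<omega>) \<partial>M)"
    by simp
  have "ennreal (measure N B) \<le> ennreal \<tau>"
    using B g_int finite_measure.emeasure_eq_measure[OF prob_space.finite_measure[OF N(1)]] by simp
  then have "measure N B \<le> \<tau>"
    using \<open>0 \<le> \<tau>\<close> by (simp add: ennreal_le_iff)
  then have "(N, fst, \<lambda>\<eta>. fst (snd \<eta>), B) \<in> {(M :: ('x \<times> 'x \<times> bool) measure, X, Y, B).
      prob_space M \<and> X \<in> measurable M borel \<and> Y \<in> measurable M borel \<and>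
      distr M borel X = pX \<and> distr M borel Y = pX \<and> B \<in> sets M \<and> measure M B \<le> \<tau>}"
    using N B law law_X law_Y by (simp cong: measurable_cong_sets)
  then show ?thesis
    unfolding ui_sup_def integral_d[symmetric] by (rule SUP_upper2) simp
qed

lemma distr_seqM_component:
  assumes "prob_space p" "sets p = sets borel" "t < n"
  shows "distr (seqM n p) borel (\<lambda>x. x t) = p"
proof -
  have "distr (seqM n p) borel (\<lambda>x. x t) = distr (seqM n p) p (\<lambda>x. x t)"
    using assms(2) by (intro distr_cong) simp_all
  also have "\<dots> = p"
    using assms by (intro distr_PiM_component) auto
  finally show ?thesis .
qed

lemma ennreal_avg_dist:
  assumes "\<And>x y. 0 \<le> d x y"
  shows "ennreal (avg_dist d n x y) = ennreal (1 / real n) * (\<Sum>t<n. ennreal (d (x t) (y t)))"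
  using assms by (simp add: avg_dist_def sum_nonneg sum_ennreal flip: ennreal_mult)

lemma nn_integral_avg_dist_weighted_le_ui_sup:
  fixes d :: "'x::topological_space \<Rightarrow> 'x \<Rightarrow> real"
  assumes "n > 0" and \<mu>: "prob_space \<mu>" and sets_\<mu>: "sets \<mu> = sets (seqM n borel \<Otimes>\<^sub>M seqM n borel)"
    and law_fst: "distr \<mu> (seqM n borel) fst = seqM n pX"
    and law_snd: "distr \<mu> (seqM n borel) snd = seqM n pX"
    and pX: "prob_space pX" "sets pX = sets borel"
    and d[measurable]: "(\<lambda>(x, y). d x y) \<in> borel_measurable (borel \<Otimes>\<^sub>M borel)"
    and d_nonneg: "\<And>x y. 0 \<le> d x y"
    and g[measurable]: "g \<in> borel_measurable \<mu>" and g_01: "\<And>q. 0 \<le> g q \<and> g q \<le> 1"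
    and g_int: "(\<integral>\<^sup>+q. ennreal (g q) \<partial>\<mu>) \<le> ennreal \<tau>" and "0 \<le> \<tau>"
  shows "(\<integral>\<^sup>+q. ennreal (avg_dist d n (fst q) (snd q)) * ennreal (g q) \<partial>\<mu>) \<le> ui_sup d pX \<tau>"
proof -
  have component[measurable]: "(\<lambda>x. x t) \<in> seqM n borel \<rightarrow>\<^sub>M borel" if "t < n" for t
    using that by (intro measurable_component_singleton) simp
  have measurable_\<mu>: "measurable \<mu> = measurable (seqM n borel \<Otimes>\<^sub>M seqM n borel)"
    by (intro ext measurable_cong_sets sets_\<mu> refl)
  have law_component: "distr \<mu> borel (\<lambda>q. h q t) = pX"
    if t: "t < n" and h: "h \<in> \<mu> \<rightarrow>\<^sub>M seqM n borel" "distr \<mu> (seqM n borel) h = seqM n pX" for h t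
    using distr_distr[OF component[OF t] h(1)] distr_seqM_component[OF pX t] h(2)
    by (simp add: comp_def)
  have term_le: "(\<integral>\<^sup>+q. ennreal (d (fst q t) (snd q t)) * ennreal (g q) \<partial>\<mu>) \<le> ui_sup d pX \<tau>"
    if t: "t < n" for t
    using t \<open>0 \<le> \<tau>\<close> g_01 g_int
    by (intro nn_integral_weighted_le_ui_sup[OF \<mu> _ _ law_component law_component d g])
      (simp_all add: measurable_\<mu> law_fst law_snd)
  have term_measurable:
    "(\<lambda>q. ennreal (d (fst q t) (snd q t)) * ennreal (g q)) \<in> borel_measurable \<mu>" if "t \<in> {..<n}" for t
  proof -
    have "(\<lambda>q. d (fst q t) (snd q t)) \<in> borel_measurable \<mu>"
      using that unfolding measurable_\<mu> by measurable
    then show ?thesis by measurable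
  qed
  have "(\<integral>\<^sup>+q. ennreal (avg_dist d n (fst q) (snd q)) * ennreal (g q) \<partial>\<mu>)
      = (\<integral>\<^sup>+q. ennreal (1 / real n) * (\<Sum>t<n. ennreal (d (fst q t) (snd q t)) * ennreal (g q)) \<partial>\<mu>)"
    by (simp add: ennreal_avg_dist[OF d_nonneg] sum_distrib_right mult.assoc)
  also have "\<dots> = ennreal (1 / real n) * (\<Sum>t<n. \<integral>\<^sup>+q. ennreal (d (fst q t) (snd q t)) * ennreal (g q) \<partial>\<mu>)"
    using nn_integral_sum[of "{..<n}", OF term_measurable]
    by (subst nn_integral_cmult) (auto intro!: borel_measurable_sum term_measurable)
  also have "\<dots> \<le> ennreal (1 / real n) * (\<Sum>t<n. ui_sup d pX \<tau>)"
    by (intro mult_left_mono sum_mono term_le) auto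
  also have "\<dots> = ui_sup d pX \<tau>"
    using \<open>n > 0\<close> by (simp add: mult.assoc[symmetric] ennreal_of_nat_eq_real_of_nat flip: ennreal_mult)
  finally show ?thesis .
qed

section \<open>Codes and their induced distributions\<close>

lemma code_size_ge_1: "0 \<le> r \<Longrightarrow> 1 \<le> code_size n r"
  unfolding code_size_def by (simp add: one_le_floor ge_one_powr_ge_zero le_nat_iff)

lemma bind_measure_pmf_cong_sets:
  assumes "\<And>m. sets (f m) = sets N" "\<And>m. sets (g m) = sets N" "\<And>m. m \<in> set_pmf p \<Longrightarrow> f m = g m"
  shows "measure_pmf p \<bind> f = measure_pmf p \<bind> g"
proof -
  have "emeasure (measure_pmf p) (f -` A \<inter> space (measure_pmf p))
      = emeasure (measure_pmf p) (g -` A \<inter> space (measure_pmf p))" for A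
    by (rule emeasure_eq_AE) (auto simp: AE_measure_pmf_iff assms(3))
  then have "distr (measure_pmf p) X f = distr (measure_pmf p) X g" for X
    unfolding distr_def by simp
  moreover have "subprob_algebra (f x) = subprob_algebra (g y)" for x y
    by (rule subprob_algebra_cong) (simp add: assms)
  ultimately show ?thesis
    unfolding bind_def by (metis (no_types))
qed

lemma measurable_measure_pmf_kernel:
  assumes "\<And>m. (\<lambda>w. pmf (P w) m) \<in> borel_measurable M"
  shows "(\<lambda>w. measure_pmf (P w :: nat pmf)) \<in> M \<rightarrow>\<^sub>M prob_algebra (count_space UNIV)"
proof (rule measurable_prob_algebraI)
  show "(\<lambda>w. measure_pmf (P w)) \<in> M \<rightarrow>\<^sub>M subprob_algebra (count_space UNIV)"
  proof (rule measurable_subprob_algebra)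
    fix A :: "nat set"
    have "(\<lambda>w. \<Sum>i. ennreal (pmf (P w) i) * indicator A i) \<in> borel_measurable M"
      using assms by measurable
    moreover have "emeasure (measure_pmf (P w)) A = (\<Sum>i. ennreal (pmf (P w) i) * indicator A i)" for w
    proof -
      have "emeasure (measure_pmf (P w)) A = (\<integral>\<^sup>+x. indicator A x \<partial>measure_pmf (P w))"
        by simp
      also have "\<dots> = (\<Sum>i. ennreal (pmf (P w) i) * indicator A i)"
        by (simp add: nn_integral_measure_pmf nn_integral_count_space_nat)
      finally show ?thesis .
    qed
    ultimately show "(\<lambda>w. emeasure (measure_pmf (P w)) A) \<in> borel_measurable M"
      by simp
  qed (auto intro: prob_space_imp_subprob_space measure_pmf.prob_space_axioms)
qed (rule measure_pmf.prob_space_axioms)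

lemma measurable_pair_count_space_nat:
  assumes "\<And>i. (\<lambda>x. f (x, i)) \<in> M \<rightarrow>\<^sub>M N"
  shows "f \<in> M \<Otimes>\<^sub>M count_space (UNIV :: nat set) \<rightarrow>\<^sub>M N"
proof -
  have "(\<lambda>p. (\<lambda>i p. f (fst p, i)) (snd p) p) \<in> M \<Otimes>\<^sub>M count_space (UNIV :: nat set) \<rightarrow>\<^sub>M N"
    by (rule measurable_compose_countable) (use assms in \<open>auto intro: measurable_compose[OF measurable_fst]\<close>)
  then show ?thesis by simp
qed

lemma in_prob_algebra_bind:
  "A \<in> space (prob_algebra M) \<Longrightarrow> K \<in> M \<rightarrow>\<^sub>M prob_algebra N \<Longrightarrow> A \<bind> K \<in> space (prob_algebra N)"
  by (simp add: space_prob_algebra prob_space_bind' sets_bind')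

lemma in_prob_algebra_distr:
  "A \<in> space (prob_algebra M) \<Longrightarrow> f \<in> M \<rightarrow>\<^sub>M N \<Longrightarrow> distr A N f \<in> space (prob_algebra N)"
  by (auto simp: space_prob_algebra intro!: prob_space.prob_space_distr cong: measurable_cong_sets)

lemma measure_pmf_bind_in_prob_algebra:
  "(\<And>m. X m \<in> space (prob_algebra N)) \<Longrightarrow> measure_pmf p \<bind> X \<in> space (prob_algebra N)"
  by (rule in_prob_algebra_bind[where M = "count_space UNIV"])
    (auto simp: space_prob_algebra measure_pmf.prob_space_axioms measurable_count_space_eq1)

lemma in_subprob_algebra_of_prob_algebra:
  "A \<in> space (prob_algebra N) \<Longrightarrow> A \<in> space (subprob_algebra N)"
  by (auto simp: space_prob_algebra space_subprob_algebra prob_space_imp_subprob_space)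

lemma marg_XY_eq_distr:
  "marg_XY n P = distr P (seqM n borel \<Otimes>\<^sub>M seqM n borel) (\<lambda>p. (fst (fst p), snd (snd (snd p))))"
  unfolding marg_XY_def by (simp add: split_beta')

lemma marg_Y_eq_distr_marg_XY:
  assumes "sets P = sets ((seqM n borel \<Otimes>\<^sub>M seqM n borel) \<Otimes>\<^sub>M count_space UNIV \<Otimes>\<^sub>M count_space UNIV \<Otimes>\<^sub>M seqM n borel)"
  shows "marg_Y n P = distr (marg_XY n P) (seqM n borel) snd"
  unfolding marg_XY_def marg_Y_def using assms
  by (subst distr_distr) (auto simp: comp_def split_beta' cong: measurable_cong_sets)

locale coded_source =
  fixes n :: nat and R Rc :: real
    and pXZ :: "('x::polish_space \<times> 'z::polish_space) measure"
    and F :: "(nat \<Rightarrow> 'x) \<Rightarrow> (nat \<Rightarrow> 'z) \<Rightarrow> nat \<Rightarrow> nat pmf"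
    and G :: "(nat \<Rightarrow> 'z) \<Rightarrow> nat \<Rightarrow> nat \<Rightarrow> (nat \<Rightarrow> 'x) measure"
  assumes prob_pXZ: "prob_space pXZ" and sets_pXZ: "sets pXZ = sets borel"
    and code: "is_ED_code n R Rc F G"
    and Rc: "0 \<le> Rc"
begin

abbreviation "SX \<equiv> seqM n (borel :: 'x measure)"
abbreviation "SZ \<equiv> seqM n (borel :: 'z measure)"
abbreviation "SXZ \<equiv> SX \<Otimes>\<^sub>M SZ"
abbreviation "SInd \<equiv> SXZ \<Otimes>\<^sub>M count_space UNIV \<Otimes>\<^sub>M count_space UNIV \<Otimes>\<^sub>M SX"
abbreviation "Js \<equiv> {1..code_size n Rc}"
abbreviation "Ms \<equiv> {1..code_size n R}"

text \<open>F and G enter induced_dist only for j \<in> Js, m \<in> Ms and z \<in> space SZ; outside this range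
  they are replaced by fixed distributions, so that encoder and decoder are kernels for all indices.\<close>
definition encoder :: "(nat \<Rightarrow> 'x) \<Rightarrow> (nat \<Rightarrow> 'z) \<Rightarrow> nat \<Rightarrow> nat pmf" where
  "encoder x z j = (if j \<in> Js then F x z j else return_pmf 1)"

definition decoder :: "(nat \<Rightarrow> 'z) \<Rightarrow> nat \<Rightarrow> nat \<Rightarrow> (nat \<Rightarrow> 'x) measure" where
  "decoder z j m = (if j \<in> Js \<and> m \<in> Ms \<and> z \<in> space SZ then G z j m
     else return SX (\<lambda>t\<in>{..<n}. undefined))"

definition is_decoder_kernel :: "((nat \<Rightarrow> 'z) \<Rightarrow> nat \<Rightarrow> nat \<Rightarrow> (nat \<Rightarrow> 'x) measure) \<Rightarrow> bool" where
  "is_decoder_kernel H \<longleftrightarrow> (\<forall>z j m. H z j m \<in> space (prob_algebra SX)) \<and>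
     (\<forall>j m. (\<lambda>z. H z j m) \<in> SZ \<rightarrow>\<^sub>M prob_algebra SX)"

definition code_kernel ::
  "((nat \<Rightarrow> 'z) \<Rightarrow> nat \<Rightarrow> nat \<Rightarrow> (nat \<Rightarrow> 'x) measure) \<Rightarrow> (nat \<Rightarrow> 'x) \<times> (nat \<Rightarrow> 'z)
    \<Rightarrow> (((nat \<Rightarrow> 'x) \<times> (nat \<Rightarrow> 'z)) \<times> nat \<times> nat \<times> (nat \<Rightarrow> 'x)) measure" where
  "code_kernel H w = measure_pmf (pmf_of_set Js) \<bind> (\<lambda>j. measure_pmf (encoder (fst w) (snd w) j)
     \<bind> (\<lambda>m. distr (H (snd w) j m) SInd (\<lambda>y. (w, j, m, y))))"

definition output_kernel :: "((nat \<Rightarrow> 'x) \<Rightarrow> (nat \<Rightarrow> 'x) measure)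
    \<Rightarrow> ((nat \<Rightarrow> 'x) \<times> (nat \<Rightarrow> 'z)) \<times> nat \<times> nat \<times> (nat \<Rightarrow> 'x)
    \<Rightarrow> (((nat \<Rightarrow> 'x) \<times> (nat \<Rightarrow> 'z)) \<times> nat \<times> nat \<times> (nat \<Rightarrow> 'x)) measure" where
  "output_kernel K p = distr (K (snd (snd (snd p)))) SInd (\<lambda>y. (fst p, fst (snd p), fst (snd (snd p)), y))"

lemma decoder_is_decoder_kernel: "is_decoder_kernel decoder"
proof -
  have default: "return SX (\<lambda>t\<in>{..<n}. undefined) \<in> space (prob_algebra SX)"
    by (simp add: space_prob_algebra prob_space_return space_PiM)
  have "(\<lambda>z. decoder z j m) \<in> SZ \<rightarrow>\<^sub>M prob_algebra SX" for j m
  proof (cases "j \<in> Js \<and> m \<in> Ms")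
    case True
    then show ?thesis using code unfolding is_ED_code_def
      by (subst measurable_cong[where g = "\<lambda>z. G z j m"]) (auto simp: decoder_def)
  next
    case False
    then have "(\<lambda>z. decoder z j m) = (\<lambda>z. return SX (\<lambda>t\<in>{..<n}. undefined))"
      by (auto simp: decoder_def)
    then show ?thesis using default by simp
  qed
  moreover have "decoder z j m \<in> space (prob_algebra SX)" for z j m
    using default measurable_space[OF calculation]
    by (cases "z \<in> space SZ") (auto simp: decoder_def)
  ultimately show ?thesis
    unfolding is_decoder_kernel_def by blast
qed

lemma is_decoder_kernel_bind:
  "is_decoder_kernel H \<Longrightarrow> K \<in> SX \<rightarrow>\<^sub>M prob_algebra SX \<Longrightarrow> is_decoder_kernel (\<lambda>z j m. H z j m \<bind> K)"
  unfolding is_decoder_kernel_def using in_prob_algebra_bind measurable_bind_prob_space by blast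

lemma measurable_encoder: "(\<lambda>w. measure_pmf (encoder (fst w) (snd w) j)) \<in> SXZ \<rightarrow>\<^sub>M prob_algebra (count_space UNIV)"
proof (cases "j \<in> Js")
  case True
  then show ?thesis
    using code unfolding is_ED_code_def
    by (intro measurable_measure_pmf_kernel) (simp add: encoder_def split_beta')
next
  case False
  then have "(\<lambda>w. measure_pmf (encoder (fst w) (snd w) j)) = (\<lambda>_. measure_pmf (return_pmf 1))"
    by (auto simp: encoder_def)
  then show ?thesis
    by (simp add: space_prob_algebra measure_pmf.prob_space_axioms)
qed

lemma measurable_code_kernel:
  assumes H: "is_decoder_kernel H"
  shows "code_kernel H \<in> SXZ \<rightarrow>\<^sub>M prob_algebra SInd"
proof -
  have "(\<lambda>w. distr (H (snd w) j m) SInd (\<lambda>y. (w, j, m, y))) \<in> SXZ \<rightarrow>\<^sub>M prob_algebra SInd" for j m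
    using H unfolding is_decoder_kernel_def
    by (intro measurable_distr_prob_space2[OF measurable_compose[OF measurable_snd]]) auto
  then have "(\<lambda>(w, m). distr (H (snd w) j m) SInd (\<lambda>y. (w, j, m, y)))
      \<in> SXZ \<Otimes>\<^sub>M count_space UNIV \<rightarrow>\<^sub>M prob_algebra SInd" for j
    by (intro measurable_pair_count_space_nat) simp
  then have "(\<lambda>(w, j). measure_pmf (encoder (fst w) (snd w) j)
      \<bind> (\<lambda>m. distr (H (snd w) j m) SInd (\<lambda>y. (w, j, m, y))))
      \<in> SXZ \<Otimes>\<^sub>M count_space UNIV \<rightarrow>\<^sub>M prob_algebra SInd"
    by (intro measurable_pair_count_space_nat)
      (simp add: measurable_bind_prob_space2[OF measurable_encoder])
  moreover have "measure_pmf (pmf_of_set Js) \<in> space (prob_algebra (count_space UNIV))"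
    by (simp add: space_prob_algebra measure_pmf.prob_space_axioms)
  ultimately show ?thesis
    unfolding code_kernel_def by (rule measurable_bind_prob_space2[OF measurable_const, rotated])
qed

lemma measurable_output_kernel:
  assumes K: "K \<in> SX \<rightarrow>\<^sub>M prob_algebra SX"
  shows "output_kernel K \<in> SInd \<rightarrow>\<^sub>M prob_algebra SInd"
  unfolding output_kernel_def
  by (rule measurable_distr_prob_space2[OF measurable_compose[OF _ K]]) measurable

lemma measurable_source_tuple:
  "(\<lambda>w. (\<lambda>t\<in>{..<n}. fst (w t), \<lambda>t\<in>{..<n}. snd (w t))) \<in> seqM n pXZ \<rightarrow>\<^sub>M SXZ"
proof -
  have [measurable]: "fst \<in> borel \<rightarrow>\<^sub>M (borel :: 'x measure)" "snd \<in> borel \<rightarrow>\<^sub>M (borel :: 'z measure)"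
    by (intro borel_measurable_continuous_onI continuous_intros)+
  have "sets (seqM n pXZ) = sets (seqM n (borel :: ('x \<times> 'z) measure))"
    by (rule sets_PiM_cong) (auto simp: sets_pXZ)
  then show ?thesis by (simp cong: measurable_cong_sets) measurable
qed

lemma source_dist_in_prob_algebra: "source_dist n pXZ \<in> space (prob_algebra SXZ)"
  unfolding source_dist_def space_prob_algebra using prob_pXZ
  by (auto intro!: prob_space.prob_space_distr prob_space_PiM measurable_source_tuple)

lemma fst_measurable_pXZ: "fst \<in> pXZ \<rightarrow>\<^sub>M borel"
  by (simp add: sets_pXZ cong: measurable_cong_sets) (intro borel_measurable_continuous_onI continuous_intros)

lemma prob_pX: "prob_space (distr pXZ borel fst)"
  by (rule prob_space.prob_space_distr[OF prob_pXZ fst_measurable_pXZ])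

lemma distr_fst_source_dist: "distr (source_dist n pXZ) SX fst = seqM n (distr pXZ borel fst)"
proof -
  let ?pX = "distr pXZ borel fst"
  have "distr (source_dist n pXZ) SX fst = distr (seqM n pXZ) (seqM n ?pX) (compose {..<n} fst)"
    unfolding source_dist_def
    by (subst distr_distr[OF _ measurable_source_tuple])
      (auto intro!: distr_cong sets_PiM_cong simp: compose_def)
  also have "\<dots> = seqM n (distr pXZ ?pX fst)"
    using fst_measurable_pXZ
    by (intro distr_PiM_finite_prob_space') (simp_all add: prob_pXZ prob_pX cong: measurable_cong_sets)
  also have "\<dots> = seqM n ?pX"
    by (intro PiM_cong distr_cong) simp_all
  finally show ?thesis .
qed

lemma induced_dist_eq_bind_code_kernel:
  assumes H: "is_decoder_kernel H"
    and agree: "\<And>z j m. z \<in> space SZ \<Longrightarrow> j \<in> Js \<Longrightarrow> m \<in> Ms \<Longrightarrow> D z j m = H z j m"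
  shows "induced_dist n R Rc pXZ F D = source_dist n pXZ \<bind> code_kernel H"
  unfolding induced_dist_def
proof (rule bind_cong[OF refl])
  fix w assume "w \<in> space (source_dist n pXZ)"
  then obtain x z where w: "w = (x, z)" "x \<in> space SX" "z \<in> space SZ"
    by (auto simp: source_dist_def space_pair_measure)
  have "measure_pmf (F x z j) \<bind> (\<lambda>m. distr (D z j m) SInd (\<lambda>y. ((x, z), j, m, y)))
      = measure_pmf (encoder x z j) \<bind> (\<lambda>m. distr (H z j m) SInd (\<lambda>y. ((x, z), j, m, y)))"
    if j: "j \<in> Js" for j
  proof -
    have "set_pmf (F x z j) \<subseteq> Ms"
      using code w j by (auto simp: is_ED_code_def)
    then show ?thesis
      using j agree[OF w(3) j] by (auto simp: encoder_def intro!: bind_measure_pmf_cong_sets[where N = SInd])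
  qed
  moreover have "set_pmf (pmf_of_set Js) = Js"
    using code_size_ge_1[OF Rc, of n] by simp
  ultimately show "(case w of (x, z) \<Rightarrow> measure_pmf (pmf_of_set Js) \<bind> (\<lambda>j. measure_pmf (F x z j)
      \<bind> (\<lambda>m. distr (D z j m) SInd (\<lambda>y. ((x, z), j, m, y))))) = code_kernel H w"
    unfolding w code_kernel_def
    by (auto intro!: bind_measure_pmf_cong_sets[where N = SInd] sets_bind)
qed

lemma measurable_tuple: "w \<in> space SXZ \<Longrightarrow> (\<lambda>y. (w, j, m, y)) \<in> SX \<rightarrow>\<^sub>M SInd"
  by measurable

lemma decoded_in_prob_algebra:
  "is_decoder_kernel H \<Longrightarrow> w \<in> space SXZ \<Longrightarrow> distr (H z j m) SInd (\<lambda>y. (w, j, m, y)) \<in> space (prob_algebra SInd)"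
  unfolding is_decoder_kernel_def by (intro in_prob_algebra_distr measurable_tuple) auto

lemma encoded_in_subprob_algebra:
  "is_decoder_kernel H \<Longrightarrow> w \<in> space SXZ
    \<Longrightarrow> measure_pmf p \<bind> (\<lambda>m. distr (H z j m) SInd (\<lambda>y. (w, j, m, y))) \<in> space (subprob_algebra SInd)"
  by (intro in_subprob_algebra_of_prob_algebra measure_pmf_bind_in_prob_algebra decoded_in_prob_algebra)

lemma code_kernel_bind_output_kernel:
  assumes H: "is_decoder_kernel H" and K: "K \<in> SX \<rightarrow>\<^sub>M prob_algebra SX" and w: "w \<in> space SXZ"
  shows "code_kernel (\<lambda>z j m. H z j m \<bind> K) w = code_kernel H w \<bind> output_kernel K"
proof -
  note output_K = measurable_prob_algebraD[OF measurable_output_kernel[OF K]]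
  have H_in: "H z j m \<in> space (prob_algebra SX)" for z j m
    using H by (simp add: is_decoder_kernel_def)
  then have sets_H: "sets (H z j m) = sets SX" and not_empty_H: "space (H z j m) \<noteq> {}" for z j m
    by (auto simp: space_prob_algebra prob_space.not_empty)
  have decoded: "distr (H z j m \<bind> K) SInd (\<lambda>y. (w, j, m, y))
      = distr (H z j m) SInd (\<lambda>y. (w, j, m, y)) \<bind> output_kernel K" for z j m
  proof -
    have "distr (H z j m \<bind> K) SInd (\<lambda>y. (w, j, m, y)) = H z j m \<bind> (\<lambda>y. distr (K y) SInd (\<lambda>y'. (w, j, m, y')))"
      by (rule distr_bind[OF _ not_empty_H measurable_tuple[OF w]])
        (simp add: sets_H measurable_prob_algebraD[OF K] cong: measurable_cong_sets)
    also have "\<dots> = H z j m \<bind> (\<lambda>y. output_kernel K (w, j, m, y))"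
      by (simp add: output_kernel_def)
    also have "\<dots> = distr (H z j m) SInd (\<lambda>y. (w, j, m, y)) \<bind> output_kernel K"
      using measurable_tuple[OF w] output_K not_empty_H
      by (intro bind_distr[symmetric]) (auto simp: sets_H cong: measurable_cong_sets)
    finally show ?thesis .
  qed
  have encoded: "measure_pmf p \<bind> (\<lambda>m. distr (H z j m \<bind> K) SInd (\<lambda>y. (w, j, m, y)))
      = (measure_pmf p \<bind> (\<lambda>m. distr (H z j m) SInd (\<lambda>y. (w, j, m, y)))) \<bind> output_kernel K" for p z j
    using H w by (simp add: decoded bind_assoc[OF _ output_K] in_subprob_algebra_of_prob_algebra
        decoded_in_prob_algebra measurable_count_space_eq1)
  have "code_kernel H w \<bind> output_kernel K = measure_pmf (pmf_of_set Js) \<bind> (\<lambda>j.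
      (measure_pmf (encoder (fst w) (snd w) j) \<bind> (\<lambda>m. distr (H (snd w) j m) SInd (\<lambda>y. (w, j, m, y))))
      \<bind> output_kernel K)"
    unfolding code_kernel_def using H w
    by (simp add: bind_assoc[OF _ output_K] encoded_in_subprob_algebra measurable_count_space_eq1)
  then show ?thesis
    by (simp add: code_kernel_def encoded)
qed

lemma distr_code_kernel_fst:
  assumes H: "is_decoder_kernel H" and w: "w \<in> space SXZ"
  shows "distr (code_kernel H w) SX (\<lambda>p. fst (fst p)) = return SX (fst w)"
proof -
  have fst_fst[measurable]: "(\<lambda>p. fst (fst p)) \<in> SInd \<rightarrow>\<^sub>M SX"
    by measurable
  have fst_w: "fst w \<in> space SX"
    using w by (auto simp: space_pair_measure)
  have return_fst: "measure_pmf p \<bind> (\<lambda>_. return SX (fst w)) = return SX (fst w)" for p :: "nat pmf"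
    using fst_w by (intro bind_const') (auto intro!: prob_space_imp_subprob_space prob_space_return
        simp: measure_pmf.prob_space_axioms)
  have decoded: "distr (distr (H z j m) SInd (\<lambda>y. (w, j, m, y))) SX (\<lambda>p. fst (fst p)) = return SX (fst w)"
    for z j m
  proof -
    have H_in: "H z j m \<in> space (prob_algebra SX)"
      using H by (simp add: is_decoder_kernel_def)
    then have "distr (distr (H z j m) SInd (\<lambda>y. (w, j, m, y))) SX (\<lambda>p. fst (fst p)) = distr (H z j m) SX (\<lambda>_. fst w)"
      using measurable_tuple[OF w]
      by (subst distr_distr) (auto simp: space_prob_algebra comp_def cong: measurable_cong_sets)
    also have "\<dots> = return SX (fst w)"
      using H_in fst_w by (simp add: space_prob_algebra prob_space.distr_const)
    finally show ?thesis .
  qed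
  have encoded: "distr (measure_pmf p \<bind> (\<lambda>m. distr (H z j m) SInd (\<lambda>y. (w, j, m, y)))) SX (\<lambda>p. fst (fst p))
      = return SX (fst w)" for p z j
    using H w
    by (simp add: distr_bind[OF _ _ fst_fst] decoded return_fst in_subprob_algebra_of_prob_algebra
        decoded_in_prob_algebra measurable_count_space_eq1)
  show ?thesis
    using H w unfolding code_kernel_def
    by (simp add: distr_bind[OF _ _ fst_fst] encoded return_fst encoded_in_subprob_algebra
        measurable_count_space_eq1)
qed

lemma induced_dist_eq_bind_decoder: "induced_dist n R Rc pXZ F G = source_dist n pXZ \<bind> code_kernel decoder"
  by (rule induced_dist_eq_bind_code_kernel[OF decoder_is_decoder_kernel]) (simp add: decoder_def)

lemma induced_dist_in_prob_algebra: "induced_dist n R Rc pXZ F G \<in> space (prob_algebra SInd)"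
  unfolding induced_dist_eq_bind_decoder
  by (rule in_prob_algebra_bind[OF source_dist_in_prob_algebra measurable_code_kernel[OF decoder_is_decoder_kernel]])

lemma marg_XY_in_prob_algebra: "marg_XY n (induced_dist n R Rc pXZ F G) \<in> space (prob_algebra (SX \<Otimes>\<^sub>M SX))"
  unfolding marg_XY_eq_distr by (rule in_prob_algebra_distr[OF induced_dist_in_prob_algebra]) measurable

lemma distr_fst_marg_XY: "distr (marg_XY n (induced_dist n R Rc pXZ F G)) SX fst = seqM n (distr pXZ borel fst)"
proof -
  let ?src = "source_dist n pXZ"
  have src: "prob_space ?src" "sets ?src = sets SXZ"
    using source_dist_in_prob_algebra by (simp_all add: space_prob_algebra)
  have not_empty: "space ?src \<noteq> {}" and space_src: "space ?src = space SXZ"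
    using prob_space.not_empty[OF src(1)] sets_eq_imp_space_eq[OF src(2)] by simp_all
  have fst_fst[measurable]: "(\<lambda>p. fst (fst p)) \<in> SInd \<rightarrow>\<^sub>M SX"
    by measurable
  have sets_induced: "sets (induced_dist n R Rc pXZ F G) = sets SInd"
    using induced_dist_in_prob_algebra by (simp add: space_prob_algebra)
  have "distr (marg_XY n (induced_dist n R Rc pXZ F G)) SX fst
      = distr (induced_dist n R Rc pXZ F G) SX (fst \<circ> (\<lambda>p. (fst (fst p), snd (snd (snd p)))))"
    unfolding marg_XY_eq_distr
    by (rule distr_distr) (simp_all add: sets_induced cong: measurable_cong_sets)
  also have "\<dots> = distr (induced_dist n R Rc pXZ F G) SX (\<lambda>p. fst (fst p))"
    by (simp add: comp_def)
  also have "\<dots> = ?src \<bind> (\<lambda>w. distr (code_kernel decoder w) SX (\<lambda>p. fst (fst p)))"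
    unfolding induced_dist_eq_bind_decoder
    using measurable_prob_algebraD[OF measurable_code_kernel[OF decoder_is_decoder_kernel]] src(2)
    by (intro distr_bind[OF _ not_empty fst_fst]) (simp cong: measurable_cong_sets)
  also have "\<dots> = ?src \<bind> (\<lambda>w. return SX (fst w))"
    by (intro bind_cong refl) (simp add: space_src distr_code_kernel_fst decoder_is_decoder_kernel)
  also have "\<dots> = distr ?src SX fst"
    using src(2) by (intro bind_return_distr'[OF not_empty]) (simp cong: measurable_cong_sets)
  also have "\<dots> = seqM n (distr pXZ borel fst)"
    by (rule distr_fst_source_dist)
  finally show ?thesis .
qed

context
  fixes K :: "(nat \<Rightarrow> 'x) \<Rightarrow> (nat \<Rightarrow> 'x) measure"
  assumes K: "K \<in> SX \<rightarrow>\<^sub>M prob_algebra SX"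
begin

lemma is_ED_code_bind: "is_ED_code n R Rc F (\<lambda>z j m. G z j m \<bind> K)"
  using code unfolding is_ED_code_def by (auto intro!: measurable_bind_prob_space[OF _ K])

lemma induced_dist_bind:
  "induced_dist n R Rc pXZ F (\<lambda>z j m. G z j m \<bind> K) = induced_dist n R Rc pXZ F G \<bind> output_kernel K"
proof -
  let ?src = "source_dist n pXZ"
  have "induced_dist n R Rc pXZ F (\<lambda>z j m. G z j m \<bind> K) = ?src \<bind> code_kernel (\<lambda>z j m. decoder z j m \<bind> K)"
    by (intro induced_dist_eq_bind_code_kernel is_decoder_kernel_bind[OF decoder_is_decoder_kernel K])
      (simp add: decoder_def)
  also have "\<dots> = ?src \<bind> (\<lambda>w. code_kernel decoder w \<bind> output_kernel K)"
    by (intro bind_cong refl code_kernel_bind_output_kernel[OF decoder_is_decoder_kernel K])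
      (simp add: source_dist_def)
  also have "\<dots> = (?src \<bind> code_kernel decoder) \<bind> output_kernel K"
  proof (rule bind_assoc[symmetric, OF _ measurable_prob_algebraD[OF measurable_output_kernel[OF K]]])
    show "code_kernel decoder \<in> ?src \<rightarrow>\<^sub>M subprob_algebra SInd"
      using measurable_prob_algebraD[OF measurable_code_kernel[OF decoder_is_decoder_kernel]]
      by (simp add: source_dist_def cong: measurable_cong_sets)
  qed
  finally show ?thesis
    by (simp add: induced_dist_eq_bind_decoder)
qed

lemma marg_XY_bind_output_kernel:
  assumes P: "P \<in> space (prob_algebra SInd)"
  shows "marg_XY n (P \<bind> output_kernel K) = marg_XY n P \<bind> kernel_on_snd SX SX K"
proof -
  have sets_P: "sets P = sets SInd" and not_empty: "space P \<noteq> {}"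
    using P by (auto simp: space_prob_algebra prob_space.not_empty)
  have xy_SInd: "(\<lambda>p. (fst (fst p), snd (snd (snd p)))) \<in> SInd \<rightarrow>\<^sub>M SX \<Otimes>\<^sub>M SX"
    by measurable
  then have xy: "(\<lambda>p. (fst (fst p), snd (snd (snd p)))) \<in> P \<rightarrow>\<^sub>M SX \<Otimes>\<^sub>M SX"
    by (simp add: measurable_cong_sets[OF sets_P refl])
  have output_kernel_P: "output_kernel K \<in> P \<rightarrow>\<^sub>M subprob_algebra SInd"
    using measurable_prob_algebraD[OF measurable_output_kernel[OF K]]
    by (simp add: measurable_cong_sets[OF sets_P refl])
  have "marg_XY n (P \<bind> output_kernel K)
      = P \<bind> (\<lambda>p. distr (output_kernel K p) (SX \<Otimes>\<^sub>M SX) (\<lambda>p. (fst (fst p), snd (snd (snd p)))))"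
    unfolding marg_XY_eq_distr by (rule distr_bind[OF output_kernel_P not_empty xy_SInd])
  also have "\<dots> = P \<bind> (\<lambda>p. kernel_on_snd SX SX K (fst (fst p), snd (snd (snd p))))"
  proof (intro bind_cong refl)
    fix p assume "p \<in> space P"
    then have "p \<in> space SInd"
      by (simp add: sets_eq_imp_space_eq[OF sets_P])
    then have p: "fst p \<in> space SXZ" "snd (snd (snd p)) \<in> space SX"
      by (simp_all add: space_pair_measure mem_Times_iff)
    then have "sets (K (snd (snd (snd p)))) = sets SX"
      using measurable_space[OF K] by (simp add: space_prob_algebra)
    then have tuple: "(\<lambda>y. (fst p, fst (snd p), fst (snd (snd p)), y)) \<in> K (snd (snd (snd p))) \<rightarrow>\<^sub>M SInd"
      unfolding measurable_cong_sets[OF _ refl] using p(1) by measurable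
    show "distr (output_kernel K p) (SX \<Otimes>\<^sub>M SX) (\<lambda>p. (fst (fst p), snd (snd (snd p))))
        = kernel_on_snd SX SX K (fst (fst p), snd (snd (snd p)))"
      unfolding output_kernel_def kernel_on_snd_def distr_distr[OF xy_SInd tuple]
      by (simp add: comp_def)
  qed
  also have "\<dots> = marg_XY n P \<bind> kernel_on_snd SX SX K"
    unfolding marg_XY_eq_distr
    by (rule bind_distr[symmetric, OF xy measurable_prob_algebraD[OF measurable_kernel_on_snd[OF K]] not_empty])
  finally show ?thesis .
qed

end

end

section \<open>Repairing the output law\<close>

lemma abs_measure_diff_le_tv_dist:
  assumes "finite_measure P" "finite_measure Q" "A \<in> sets P"
  shows "\<bar>measure P A - measure Q A\<bar> \<le> tv_dist P Q"
  unfolding tv_dist_def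
proof (rule cSUP_upper[OF assms(3)], rule bdd_aboveI2)
  fix A
  have "\<bar>measure P A - measure Q A\<bar> \<le> measure P A + measure Q A" by (simp add: abs_le_iff)
  also have "\<dots> \<le> measure P (space P) + measure Q (space Q)"
    using assms(1,2) by (intro add_mono finite_measure.bounded_measure)
  finally show "\<bar>measure P A - measure Q A\<bar> \<le> measure P (space P) + measure Q (space Q)" .
qed

lemma measure_distr_snd:
  assumes "sets M = sets (A \<Otimes>\<^sub>M B)" "S \<in> sets B"
  shows "measure (distr M B snd) S = measure M (space A \<times> S)"
proof -
  have "measure (distr M B snd) S = measure M (snd -` S \<inter> space M)"
    using assms by (intro measure_distr) (simp_all cong: measurable_cong_sets)
  also have "snd -` S \<inter> space M = space A \<times> S"
    using sets.sets_into_space[OF assms(2)] sets_eq_imp_space_eq[OF assms(1)]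
    by (auto simp: space_pair_measure)
  finally show ?thesis .
qed

lemma measure_distr_snd_le_of_tv_dist:
  assumes P: "prob_space P" "sets P = sets (A \<Otimes>\<^sub>M B)" and Q: "prob_space Q" "sets Q = sets (A \<Otimes>\<^sub>M B)"
    and \<nu>: "prob_space \<nu>" "sets \<nu> = sets B"
    and tv_PQ: "tv_dist P Q \<le> e1" and tv_Q\<nu>: "tv_dist (distr Q B snd) \<nu> \<le> e2"
    and S: "S \<in> sets B"
  shows "measure (distr P B snd) S \<le> measure \<nu> S + (e2 + e1)"
proof -
  have "space A \<times> S \<in> sets P"
    using S P(2) by simp
  then have "\<bar>measure P (space A \<times> S) - measure Q (space A \<times> S)\<bar> \<le> e1"
    using abs_measure_diff_le_tv_dist[OF P(1)[THEN prob_space.finite_measure] Q(1)[THEN prob_space.finite_measure]]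
      tv_PQ by fastforce
  moreover have "prob_space (distr Q B snd)"
    using Q by (intro prob_space.prob_space_distr) (simp_all cong: measurable_cong_sets)
  then have "\<bar>measure (distr Q B snd) S - measure \<nu> S\<bar> \<le> e2"
    using abs_measure_diff_le_tv_dist[OF prob_space.finite_measure prob_space.finite_measure[OF \<nu>(1)]]
      tv_Q\<nu> S by fastforce
  ultimately show ?thesis
    using measure_distr_snd[OF P(2) S] measure_distr_snd[OF Q(2) S] by linarith
qed

lemma snd_marginal_repair_exists:
  assumes \<mu>: "\<mu> \<in> space (prob_algebra (M \<Otimes>\<^sub>M N))"
    and \<nu>: "prob_space \<nu>" "sets \<nu> = sets N" and "0 \<le> \<tau>"
    and close: "\<And>B. B \<in> sets N \<Longrightarrow> measure (distr \<mu> N snd) B \<le> measure \<nu> B + \<tau>"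
  obtains K where "K \<in> N \<rightarrow>\<^sub>M prob_algebra N" "distr (\<mu> \<bind> kernel_on_snd M N K) N snd = \<nu>"
    "\<And>A. A \<in> sets (M \<Otimes>\<^sub>M N) \<Longrightarrow> measure (\<mu> \<bind> kernel_on_snd M N K) A \<le> measure \<mu> A + \<tau>"
proof -
  let ?\<mu>Y = "distr \<mu> N snd"
  have prob_\<mu>: "prob_space \<mu>" and sets_\<mu>: "sets \<mu> = sets (M \<Otimes>\<^sub>M N)"
    using \<mu> by (simp_all add: space_prob_algebra)
  have prob_\<mu>Y: "prob_space ?\<mu>Y"
    using prob_\<mu> sets_\<mu> by (intro prob_space.prob_space_distr) (simp_all cong: measurable_cong_sets)
  have sets_\<mu>Y: "sets ?\<mu>Y = sets N"
    by simp
  obtain K g where K: "K \<in> ?\<mu>Y \<rightarrow>\<^sub>M prob_algebra ?\<mu>Y" and bind_K: "?\<mu>Y \<bind> K = \<nu>"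
    and g: "g \<in> borel_measurable ?\<mu>Y" "(\<integral>\<^sup>+y. ennreal (g y) \<partial>?\<mu>Y) \<le> ennreal \<tau>"
    and K_le: "\<And>y B. y \<in> space ?\<mu>Y \<Longrightarrow> B \<in> sets ?\<mu>Y \<Longrightarrow> emeasure (K y) B \<le> indicator B y + ennreal (g y)"
    using transport_kernel_exists[OF prob_\<mu>Y \<nu>(1) _ close] \<nu>(2) by (metis sets_\<mu>Y)
  have K_N: "K \<in> N \<rightarrow>\<^sub>M prob_algebra N"
    using K by (simp add: prob_algebra_def cong: measurable_cong_sets subprob_algebra_cong)
  show ?thesis
  proof (rule that[OF K_N])
    show "distr (\<mu> \<bind> kernel_on_snd M N K) N snd = \<nu>"
      using distr_snd_bind_kernel_on_snd[OF K_N \<mu>] bind_K by simp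
    fix A assume A: "A \<in> sets (M \<Otimes>\<^sub>M N)"
    have "emeasure (\<mu> \<bind> kernel_on_snd M N K) A \<le> emeasure \<mu> A + ennreal \<tau>"
      using emeasure_bind_kernel_on_snd_le[OF K_N \<mu> _ K_le A] g by (simp add: add_left_mono order_trans)
    moreover have "prob_space (\<mu> \<bind> kernel_on_snd M N K)"
      by (rule prob_space_bind'[OF \<mu> measurable_kernel_on_snd[OF K_N]])
    ultimately have "ennreal (measure (\<mu> \<bind> kernel_on_snd M N K) A) \<le> ennreal (measure \<mu> A + \<tau>)"
      using prob_\<mu> \<open>0 \<le> \<tau>\<close>
      by (simp add: finite_measure.emeasure_eq_measure prob_space.finite_measure ennreal_plus)
    then show "measure (\<mu> \<bind> kernel_on_snd M N K) A \<le> measure \<mu> A + \<tau>"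
      using \<open>0 \<le> \<tau>\<close> by (metis ennreal_le_iff ennreal_plus measure_nonneg add_nonneg_nonneg)
  qed
qed

lemma measurable_avg_dist:
  assumes [measurable]: "(\<lambda>(x, y). d x y) \<in> borel_measurable (borel \<Otimes>\<^sub>M borel)"
  shows "(\<lambda>q. avg_dist d n (fst q) (snd q)) \<in> borel_measurable (seqM n borel \<Otimes>\<^sub>M seqM n borel)"
proof -
  have "(\<lambda>q. d (fst q t) (snd q t)) \<in> borel_measurable (seqM n borel \<Otimes>\<^sub>M seqM n borel)" if "t < n" for t
  proof -
    have [measurable]: "(\<lambda>x. x t) \<in> seqM n borel \<rightarrow>\<^sub>M borel"
      using that by (intro measurable_component_singleton) simp
    show ?thesis by measurable
  qed
  then show ?thesis
    unfolding avg_dist_def by (intro borel_measurable_divide borel_measurable_sum) simp_all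
qed

lemma nn_integral_avg_dist_le_of_close:
  fixes d :: "'x::topological_space \<Rightarrow> 'x \<Rightarrow> real"
  assumes "n > 0" and \<mu>: "prob_space \<mu>" "sets \<mu> = sets (seqM n borel \<Otimes>\<^sub>M seqM n borel)"
    and law_fst: "distr \<mu> (seqM n borel) fst = seqM n pX"
    and law_snd: "distr \<mu> (seqM n borel) snd = seqM n pX"
    and Q: "prob_space Q" "sets Q = sets (seqM n borel \<Otimes>\<^sub>M seqM n borel)"
    and close: "\<And>A. A \<in> sets \<mu> \<Longrightarrow> measure \<mu> A \<le> measure Q A + \<tau>" and "0 \<le> \<tau>"
    and pX: "prob_space pX" "sets pX = sets borel"
    and d: "(\<lambda>(x, y). d x y) \<in> borel_measurable (borel \<Otimes>\<^sub>M borel)" and d_nonneg: "\<And>x y. 0 \<le> d x y"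
  shows "(\<integral>\<^sup>+q. ennreal (avg_dist d n (fst q) (snd q)) \<partial>\<mu>)
    \<le> (\<integral>\<^sup>+q. ennreal (avg_dist d n (fst q) (snd q)) \<partial>Q) + ui_sup d pX \<tau>"
proof -
  have "sets Q = sets \<mu>"
    using Q(2) \<mu>(2) by simp
  obtain g where g: "g \<in> borel_measurable \<mu>" "\<And>q. 0 \<le> g q" "\<And>q. g q \<le> 1"
    "(\<integral>\<^sup>+q. ennreal (g q) \<partial>\<mu>) \<le> ennreal \<tau>"
    and split: "\<And>f. f \<in> borel_measurable \<mu>
      \<Longrightarrow> (\<integral>\<^sup>+q. f q \<partial>\<mu>) \<le> (\<integral>\<^sup>+q. f q \<partial>Q) + (\<integral>\<^sup>+q. f q * ennreal (g q) \<partial>\<mu>)"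
    using surplus_fraction_exists[OF \<mu>(1) Q(1) \<open>sets Q = sets \<mu>\<close> close] by blast
  have "(\<lambda>q. ennreal (avg_dist d n (fst q) (snd q))) \<in> borel_measurable \<mu>"
    using measurable_avg_dist[OF d] by (simp add: \<mu>(2) cong: measurable_cong_sets)
  moreover have "(\<integral>\<^sup>+q. ennreal (avg_dist d n (fst q) (snd q)) * ennreal (g q) \<partial>\<mu>) \<le> ui_sup d pX \<tau>"
    using g(2,3) by (intro nn_integral_avg_dist_weighted_le_ui_sup[OF \<open>n > 0\<close> \<mu> law_fst law_snd pX d
        d_nonneg g(1) _ g(4) \<open>0 \<le> \<tau>\<close>]) simp
  ultimately show ?thesis
    using split by (blast intro: order_trans add_left_mono)
qed

theorem mainTheorem1:
  fixes n :: nat and \<Delta> \<epsilon>1 \<epsilon>2 \<epsilon>3 R Rc :: real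
    and pXZ :: "('x::polish_space \<times> 'z::polish_space) measure"
    and d :: "'x \<Rightarrow> 'x \<Rightarrow> real"
    and Q :: "((nat \<Rightarrow> 'x) \<times> (nat \<Rightarrow> 'x)) measure"
    and F :: "(nat \<Rightarrow> 'x) \<Rightarrow> (nat \<Rightarrow> 'z) \<Rightarrow> nat \<Rightarrow> nat pmf"
    and G :: "(nat \<Rightarrow> 'z) \<Rightarrow> nat \<Rightarrow> nat \<Rightarrow> (nat \<Rightarrow> 'x) measure"
  defines "pX \<equiv> distr pXZ borel fst"
  assumes n_pos: "n > 0"
    and Delta: "\<Delta> \<ge> 0" and eps: "\<epsilon>1 > 0" "\<epsilon>2 > 0" "\<epsilon>3 > 0"
    and src: "prob_space pXZ" "sets pXZ = sets borel"
    and d_nonneg: "\<And>x y. d x y \<ge> 0"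
    and d_meas: "(\<lambda>(x, y). d x y) \<in> borel_measurable (borel \<Otimes>\<^sub>M borel)"
    and UI: "unif_integrable d pX"
    and Q: "prob_space Q" "sets Q = sets (seqM n borel \<Otimes>\<^sub>M seqM n borel)"
    and Q_dist: "(\<integral>\<^sup>+ (x, y). ennreal (avg_dist d n x y) \<partial>Q) \<le> ennreal (\<Delta> + \<epsilon>1)"
    and Q_tv: "tv_dist (distr Q (seqM n borel) snd) (seqM n pX) \<le> \<epsilon>2"
    and rates: "R \<ge> 0" "Rc \<ge> 0"
    and code: "is_ED_code n R Rc F G"
    and P1_tv: "tv_dist (marg_XY n (induced_dist n R Rc pXZ F G)) Q \<le> \<epsilon>3"
  shows "\<exists>G'. is_ED_code n R Rc F G' \<and>
           (is_D_code n R Rc F G \<longrightarrow> is_D_code n R Rc F G') \<and>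
           (\<integral>\<^sup>+ (x, y). ennreal (avg_dist d n x y) \<partial>(marg_XY n (induced_dist n R Rc pXZ F G')))
              \<le> ennreal (\<Delta> + \<epsilon>1) + ui_sup d pX (\<epsilon>2 + 2 * \<epsilon>3) \<and>
           marg_Y n (induced_dist n R Rc pXZ F G') = seqM n pX"
proof -
  interpret coded_source n R Rc pXZ F G
    by (rule coded_source.intro[OF src code rates(2)])
  define \<mu>1 where "\<mu>1 = marg_XY n (induced_dist n R Rc pXZ F G)"
  have \<mu>1: "\<mu>1 \<in> space (prob_algebra (SX \<Otimes>\<^sub>M SX))"
    unfolding \<mu>1_def by (rule marg_XY_in_prob_algebra)
  have pX: "prob_space pX" "sets pX = sets borel"
    unfolding pX_def using prob_pX by simp_all
  then have \<nu>: "prob_space (seqM n pX)" "sets (seqM n pX) = sets SX"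
    by (auto intro!: prob_space_PiM sets_PiM_cong)
  obtain K where K: "K \<in> SX \<rightarrow>\<^sub>M prob_algebra SX"
    and output_law: "distr (\<mu>1 \<bind> kernel_on_snd SX SX K) SX snd = seqM n pX"
    and moved: "\<And>A. A \<in> sets (SX \<Otimes>\<^sub>M SX) \<Longrightarrow>
      measure (\<mu>1 \<bind> kernel_on_snd SX SX K) A \<le> measure \<mu>1 A + (\<epsilon>2 + \<epsilon>3)"
    using snd_marginal_repair_exists[OF \<mu>1 \<nu>, of "\<epsilon>2 + \<epsilon>3"] eps \<mu>1 Q Q_tv P1_tv \<nu>
      measure_distr_snd_le_of_tv_dist[of \<mu>1 SX SX Q "seqM n pX" \<epsilon>3 \<epsilon>2]
    by (auto simp: space_prob_algebra \<mu>1_def)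
  define \<mu>2 where "\<mu>2 = \<mu>1 \<bind> kernel_on_snd SX SX K"
  interpret repaired: coded_source n R Rc pXZ F "\<lambda>z j m. G z j m \<bind> K"
    by (rule coded_source.intro[OF src is_ED_code_bind[OF K] rates(2)])
  have \<mu>2: "marg_XY n (induced_dist n R Rc pXZ F (\<lambda>z j m. G z j m \<bind> K)) = \<mu>2"
    unfolding \<mu>2_def \<mu>1_def induced_dist_bind[OF K]
    by (rule marg_XY_bind_output_kernel[OF K induced_dist_in_prob_algebra])
  have \<mu>2_in: "\<mu>2 \<in> space (prob_algebra (SX \<Otimes>\<^sub>M SX))"
    using repaired.marg_XY_in_prob_algebra by (simp add: \<mu>2)
  have close: "measure \<mu>2 A \<le> measure Q A + (\<epsilon>2 + 2 * \<epsilon>3)" if "A \<in> sets \<mu>2" for A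
    using that moved[of A] \<mu>1 \<mu>2_in Q P1_tv
      abs_measure_diff_le_tv_dist[of \<mu>1 Q A, OF prob_space.finite_measure prob_space.finite_measure]
    by (fastforce simp: space_prob_algebra \<mu>1_def \<mu>2_def)
  have "(\<integral>\<^sup>+q. ennreal (avg_dist d n (fst q) (snd q)) \<partial>\<mu>2) \<le> ennreal (\<Delta> + \<epsilon>1) + ui_sup d pX (\<epsilon>2 + 2 * \<epsilon>3)"
    using nn_integral_avg_dist_le_of_close[OF n_pos _ _ _ output_law[folded \<mu>2_def] Q close _ pX d_meas d_nonneg]
      \<mu>2_in distr_fst_bind_kernel_on_snd[OF K \<mu>1] distr_fst_marg_XY Q_dist eps
    by (auto simp: space_prob_algebra \<mu>2_def \<mu>1_def pX_def split_beta' intro: order_trans add_right_mono)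
  then show ?thesis
    using is_ED_code_bind[OF K] output_law repaired.induced_dist_in_prob_algebra
    by (auto simp: is_D_code_def \<mu>2 \<mu>2_def marg_Y_eq_distr_marg_XY space_prob_algebra split_beta')
qed

end
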